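(* Let $(S,P)$ be a $\Gamma$-contraction on a Hilbert space $\mathcal{H}$, let $F\in\mathcal{B}(\mathcal{D}_P)$ be the fundamental operator of $(S,P)$ and let $G\in\mathcal{B}(\mathcal{D}_{P^*})$ be the fundamental operator of $(S^*,P^* )$. Then $$\Theta_P(z)(F+F^*z)=(G^*+Gz)\Theta_P(z)\quad\text{for all } z\in\mathbb{D},$$ where $\Theta_P$ is the characteristic function of $P$.
   Context: The symmetrized bidisc is $\Gamma=\{(z_1+z_2,z_1z_2):|z_1|,|z_2|\le 1\}$. A $\Gamma$-contraction is a commuting pair $(S,P)$ of bounded operators on a Hilbert space having $\Gamma$ as a spectral set; then $P$ is a contraction and $(S^*,P^* )$ is also a $\Gamma$-contraction. For a contraction $P$, $D_P=(I-P^*P)^{1/2}$, $\mathcal{D}_P=\overline{\operatorname{Ran}}\,D_P$, and similarly $D_{P^*}$, $\mathcal{D}_{P^*}$. The fundamental operator of a $\Gamma$-contraction $(S,P)$ is the unique $F\in\mathcal{B}(\mathcal{D}_P)$ satisfying $S-S^*P=D_PFD_P$. The characteristic function of $P$ is $\Theta_P(z)=[-P+zD_{P^*}(I-zP^* )^{-1}D_P]|_{\mathcal{D}_P}\in\mathcal{B}(\mathcal{D}_P,\mathcal{D}_{P^*})$, $z\in\mathbb{D}$. *)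

theory Defs
  imports "HOL-Analysis.Analysis"
begin

class chilbert = banach +
  fixes scaleC :: "complex \<Rightarrow> 'a \<Rightarrow> 'a" (infixr \<open>*\<^sub>C\<close> 75)
  fixes cinner :: "'a \<Rightarrow> 'a \<Rightarrow> complex"
  assumes scaleC_add_right: "a *\<^sub>C (x + y) = a *\<^sub>C x + a *\<^sub>C y"
    and scaleC_add_left: "(a + b) *\<^sub>C x = a *\<^sub>C x + b *\<^sub>C x"
    and scaleC_scaleC: "a *\<^sub>C (b *\<^sub>C x) = (a * b) *\<^sub>C x"
    and scaleC_one: "1 *\<^sub>C x = x"
    and scaleC_of_real: "(complex_of_real r) *\<^sub>C x = r *\<^sub>R x"
    and cinner_conj: "cinner x y = cnj (cinner y x)"
    and cinner_add_left: "cinner (x + y) z = cinner x z + cinner y z"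
    and cinner_scaleC_left: "cinner (a *\<^sub>C x) y = a * cinner x y"
    and norm_cinner: "norm x = sqrt (Re (cinner x x))"

text \<open>Complex-linear, bounded maps on a subset (intended: a closed subspace) M.\<close>
definition clinear_on :: "'a::chilbert set \<Rightarrow> ('a \<Rightarrow> 'a) \<Rightarrow> bool" where
  "clinear_on M T \<longleftrightarrow> (\<forall>x\<in>M. \<forall>y\<in>M. T (x + y) = T x + T y)
      \<and> (\<forall>c. \<forall>x\<in>M. T (c *\<^sub>C x) = c *\<^sub>C T x)"

definition bounded_op_on :: "'a::chilbert set \<Rightarrow> ('a \<Rightarrow> 'a) \<Rightarrow> bool" where
  "bounded_op_on M T \<longleftrightarrow> clinear_on M T \<and> (\<exists>K. \<forall>x\<in>M. norm (T x) \<le> K * norm x)"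

abbreviation bop :: "('a::chilbert \<Rightarrow> 'a) \<Rightarrow> bool" where
  "bop T \<equiv> bounded_op_on UNIV T"

definition adjoint_on :: "'a::chilbert set \<Rightarrow> ('a \<Rightarrow> 'a) \<Rightarrow> 'a \<Rightarrow> 'a" where
  "adjoint_on M T y = (THE w. w \<in> M \<and> (\<forall>x\<in>M. cinner (T x) y = cinner x w))"

definition adj :: "('a::chilbert \<Rightarrow> 'a) \<Rightarrow> 'a \<Rightarrow> 'a" where
  "adj T = adjoint_on UNIV T"

definition positive_op :: "('a::chilbert \<Rightarrow> 'a) \<Rightarrow> bool" where
  "positive_op A \<longleftrightarrow> bop A \<and> (\<forall>x. Im (cinner (A x) x) = 0 \<and> 0 \<le> Re (cinner (A x) x))"

definition op_sqrt :: "('a::chilbert \<Rightarrow> 'a) \<Rightarrow> 'a \<Rightarrow> 'a" where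
  "op_sqrt A = (THE R. positive_op R \<and> R \<circ> R = A)"

definition inv_op :: "('a \<Rightarrow> 'b) \<Rightarrow> 'b \<Rightarrow> 'a" where
  "inv_op T y = (THE x. T x = y)"

definition defect :: "('a::chilbert \<Rightarrow> 'a) \<Rightarrow> 'a \<Rightarrow> 'a" where
  "defect P = op_sqrt (\<lambda>x. x - adj P (P x))"

definition defect_space :: "('a::chilbert \<Rightarrow> 'a) \<Rightarrow> 'a set" where
  "defect_space P = closure (range (defect P))"

definition gamma_set :: "(complex \<times> complex) set" where
  "gamma_set = {(z1 + z2, z1 * z2) | z1 z2. cmod z1 \<le> 1 \<and> cmod z2 \<le> 1}"

definition poly2 :: "(nat \<Rightarrow> nat \<Rightarrow> complex) \<Rightarrow> nat \<Rightarrow> complex \<Rightarrow> complex \<Rightarrow> complex" where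
  "poly2 c n s p = (\<Sum>i\<le>n. \<Sum>j\<le>n. c i j * s ^ i * p ^ j)"

definition poly2_op :: "(nat \<Rightarrow> nat \<Rightarrow> complex) \<Rightarrow> nat \<Rightarrow> ('a::chilbert \<Rightarrow> 'a) \<Rightarrow> ('a \<Rightarrow> 'a) \<Rightarrow> 'a \<Rightarrow> 'a" where
  "poly2_op c n S P x = (\<Sum>i\<le>n. \<Sum>j\<le>n. c i j *\<^sub>C (S ^^ i) ((P ^^ j) x))"

text \<open>Gamma is a spectral set for the commuting pair (S,P) of bounded operators
  (von Neumann inequality for all polynomials; Gamma is polynomially convex).\<close>
definition gamma_contraction :: "('a::chilbert \<Rightarrow> 'a) \<Rightarrow> ('a \<Rightarrow> 'a) \<Rightarrow> bool" where
  "gamma_contraction S P \<longleftrightarrow> bop S \<and> bop P \<and> S \<circ> P = P \<circ> S \<and>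
     (\<forall>c n. onorm (poly2_op c n S P) \<le> (SUP w\<in>gamma_set. cmod (poly2 c n (fst w) (snd w))))"

definition fundamental_operator :: "('a::chilbert \<Rightarrow> 'a) \<Rightarrow> ('a \<Rightarrow> 'a) \<Rightarrow> ('a \<Rightarrow> 'a) \<Rightarrow> bool" where
  "fundamental_operator S P F \<longleftrightarrow>
     bounded_op_on (defect_space P) F \<and> F ` defect_space P \<subseteq> defect_space P \<and>
     (\<forall>h. S h - adj S (P h) = defect P (F (defect P h)))"

definition char_fun :: "('a::chilbert \<Rightarrow> 'a) \<Rightarrow> complex \<Rightarrow> 'a \<Rightarrow> 'a" where
  "char_fun P z x = - P x + z *\<^sub>C defect (adj P) (inv_op (\<lambda>y. y - z *\<^sub>C adj P y) (defect P x))"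

end

theory Submission
  imports Defs
begin

text \<open>
  Write D = D_P, D' = D_{P*} and let F*, G* be the adjoints of F, G on the defect spaces.  The two fundamental equations
  S - S* P = D F D and S* - S P* = D' G D' imply the operator identities
    D S = F D + F* D P,    S* D = D F* + P* D F,    D' S* = G D' + G* D' P*,
    P F = G* P,            D' D F - P F* = G* D' D - G P,
  each checked by pairing with the dense subset range D (resp. range D') of the defect space.
  Because the resolvent (I - z P*)^{-1} commutes with P* and S*, both sides of the claimed
  identity expand to quadratic polynomials in z, and the identities above say precisely that
  their coefficients agree.  The defect operators exist as the binomial series of the square
  root of I - T* T for a contraction T, and adjoints on the defect spaces come from the
  Riesz representation theorem.
\<close>

declare scaleC_one [simp]

lemma scaleC_zero_left [simp]: "(0::complex) *\<^sub>C (x::'a::chilbert) = 0"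
  using scaleC_of_real[of 0 x] by simp

lemma scaleC_zero_right [simp]: "c *\<^sub>C (0::'a::chilbert) = 0"
proof -
  have "c *\<^sub>C (0::'a) = c *\<^sub>C 0 + c *\<^sub>C 0" using scaleC_add_right[of c 0 0] by simp
  thus ?thesis by simp
qed

lemma scaleC_minus_right: "c *\<^sub>C (- x::'a::chilbert) = - (c *\<^sub>C x)"
proof -
  have "c *\<^sub>C (x + - x) = c *\<^sub>C x + c *\<^sub>C (- x)" by (rule scaleC_add_right)
  thus ?thesis by (simp add: eq_neg_iff_add_eq_0 add.commute)
qed

lemma scaleC_diff_right: "c *\<^sub>C (x - y::'a::chilbert) = c *\<^sub>C x - c *\<^sub>C y"
  using scaleC_add_right[of c x "-y"] scaleC_minus_right[of c y] by simp

lemma scaleC_minus_left: "(- c) *\<^sub>C (x::'a::chilbert) = - (c *\<^sub>C x)"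
proof -
  have "(c + - c) *\<^sub>C x = c *\<^sub>C x + (- c) *\<^sub>C x" by (rule scaleC_add_left)
  thus ?thesis by (simp add: eq_neg_iff_add_eq_0 add.commute)
qed

lemma scaleC_minus1: "(-1::complex) *\<^sub>C (x::'a::chilbert) = - x"
  using scaleC_minus_left[of 1 x] by simp

lemma scaleC_scaleR_commute: "c *\<^sub>C (r *\<^sub>R (x::'a::chilbert)) = r *\<^sub>R (c *\<^sub>C x)"
  by (simp add: scaleC_of_real[symmetric] scaleC_scaleC mult.commute)

lemma scaleR_eq_scaleC: "r *\<^sub>R (x::'a::chilbert) = complex_of_real r *\<^sub>C x"
  by (simp add: scaleC_of_real)

lemma cinner_add_right: "cinner x (y + z) = cinner x y + cinner x (z::'a::chilbert)"
  by (metis cinner_add_left cinner_conj complex_cnj_add)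

lemma cinner_scaleC_right: "cinner x (a *\<^sub>C y) = cnj a * cinner x (y::'a::chilbert)"
  by (metis cinner_conj cinner_scaleC_left complex_cnj_mult)

lemma cinner_zero_left [simp]: "cinner 0 (y::'a::chilbert) = 0"
  using cinner_add_left[of 0 0 y] by simp

lemma cinner_zero_right [simp]: "cinner (x::'a::chilbert) 0 = 0"
  using cinner_add_right[of x 0 0] by simp

lemma cinner_minus_left: "cinner (- x) (y::'a::chilbert) = - cinner x y"
  using cinner_scaleC_left[of "-1" x y] by (simp add: scaleC_minus1)

lemma cinner_minus_right: "cinner x (- y::'a::chilbert) = - cinner x y"
  using cinner_scaleC_right[of x "-1" y] by (simp add: scaleC_minus1)

lemma cinner_diff_left: "cinner (x - z) (y::'a::chilbert) = cinner x y - cinner z y"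
  using cinner_add_left[of x "-z" y] by (simp add: cinner_minus_left)

lemma cinner_diff_right: "cinner x (y - z::'a::chilbert) = cinner x y - cinner x z"
  using cinner_add_right[of x y "-z"] by (simp add: cinner_minus_right)

lemma cinner_scaleR_left: "cinner (r *\<^sub>R x) (y::'a::chilbert) = r *\<^sub>R cinner x y"
  by (simp add: scaleR_eq_scaleC cinner_scaleC_left scaleR_conv_of_real)

lemma cinner_scaleR_right: "cinner x (r *\<^sub>R y::'a::chilbert) = r *\<^sub>R cinner x y"
  by (simp add: scaleR_eq_scaleC cinner_scaleC_right scaleR_conv_of_real)

lemmas cinner_simps = cinner_add_left cinner_add_right cinner_diff_left cinner_diff_right
  cinner_minus_left cinner_minus_right cinner_scaleC_left cinner_scaleC_right

lemma Re_cinner_self_nonneg: "0 \<le> Re (cinner x (x::'a::chilbert))"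
  using norm_ge_zero[of x] by (simp add: norm_cinner)

lemma Im_cinner_self [simp]: "Im (cinner x (x::'a::chilbert)) = 0"
proof -
  have "Im (cinner x x) = Im (cnj (cinner x x))" using cinner_conj[of x x] by (rule arg_cong)
  thus ?thesis by simp
qed

lemma Re_cinner_self: "Re (cinner x (x::'a::chilbert)) = (norm x)\<^sup>2"
  using Re_cinner_self_nonneg[of x] by (simp add: norm_cinner)

lemma cinner_self: "cinner x (x::'a::chilbert) = complex_of_real ((norm x)\<^sup>2)"
  by (rule complex_eqI) (simp_all add: Re_cinner_self)

lemma cinner_self_eq_0 [simp]: "cinner x x = 0 \<longleftrightarrow> (x::'a::chilbert) = 0"
  by (simp add: cinner_self)

lemma norm_scaleC: "norm (c *\<^sub>C (x::'a::chilbert)) = cmod c * norm x"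
proof -
  have "(norm (c *\<^sub>C x))\<^sup>2 = Re (cinner (c *\<^sub>C x) (c *\<^sub>C x))" by (simp add: Re_cinner_self)
  also have "\<dots> = Re (c * cnj c * cinner x x)"
    by (simp add: cinner_scaleC_left cinner_scaleC_right mult.assoc mult.left_commute)
  also have "\<dots> = (cmod c * norm x)\<^sup>2"
    by (simp add: cinner_self complex_mult_cnj power_mult_distrib cmod_power2)
  finally show ?thesis
    by (simp add: power2_eq_iff_nonneg)
qed

lemma Cauchy_Schwarz_cinner: "cmod (cinner x y) \<le> norm x * norm (y::'a::chilbert)"
proof (cases "y = 0")
  case True thus ?thesis by simp
next
  case False
  define a where "a = cinner x y / cinner y y"
  have yy: "cinner y y = complex_of_real ((norm y)\<^sup>2)" by (rule cinner_self)
  have ny: "norm y > 0" using False by simp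
  have "0 \<le> Re (cinner (x - a *\<^sub>C y) (x - a *\<^sub>C y))" by (rule Re_cinner_self_nonneg)
  also have "cinner (x - a *\<^sub>C y) (x - a *\<^sub>C y)
      = cinner x x - cnj a * cinner x y - a * cinner y x + a * cnj a * cinner y y"
    by (simp add: cinner_simps algebra_simps)
  also have "a * cnj a * cinner y y = cnj a * cinner x y"
    using ny by (simp add: a_def yy field_simps power2_eq_square)
  also have "cinner y x = cnj (cinner x y)" by (rule cinner_conj)
  finally have "0 \<le> Re (cinner x x) - Re (a * cnj (cinner x y))" by simp
  also have "a * cnj (cinner x y) = complex_of_real ((cmod (cinner x y))\<^sup>2 / (norm y)\<^sup>2)"
    by (simp add: a_def yy complex_mult_cnj cmod_power2)
  finally have "(cmod (cinner x y))\<^sup>2 / (norm y)\<^sup>2 \<le> (norm x)\<^sup>2"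
    by (simp add: Re_cinner_self)
  hence "(cmod (cinner x y))\<^sup>2 \<le> (norm x * norm y)\<^sup>2"
    using ny by (simp add: divide_le_eq power_mult_distrib)
  thus ?thesis
    by (meson mult_nonneg_nonneg norm_ge_zero power2_le_imp_le)
qed

lemma bounded_linear_cinner_left: "bounded_linear (\<lambda>x. cinner x (y::'a::chilbert))"
proof (rule bounded_linear_intro[where K="norm y"])
  show "\<And>x z. cinner (x + z) y = cinner x y + cinner z y" by (rule cinner_add_left)
  show "\<And>r x. cinner (r *\<^sub>R x) y = r *\<^sub>R cinner x y" by (rule cinner_scaleR_left)
  show "\<And>x. norm (cinner x y) \<le> norm x * norm y" by (rule Cauchy_Schwarz_cinner)
qed

lemma bounded_linear_cinner_right: "bounded_linear (\<lambda>y. cinner (x::'a::chilbert) y)"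
proof (rule bounded_linear_intro[where K="norm x"])
  show "\<And>y z. cinner x (y + z) = cinner x y + cinner x z" by (rule cinner_add_right)
  show "\<And>r y. cinner x (r *\<^sub>R y) = r *\<^sub>R cinner x y" by (rule cinner_scaleR_right)
  show "\<And>y. norm (cinner x y) \<le> norm y * norm x"
    using Cauchy_Schwarz_cinner[of x] by (simp add: mult.commute)
qed

lemma bounded_linear_scaleC: "bounded_linear (\<lambda>x::'a::chilbert. c *\<^sub>C x)"
proof (rule bounded_linear_intro[where K="cmod c"])
  show "\<And>x y. c *\<^sub>C (x + y) = c *\<^sub>C x + c *\<^sub>C (y::'a)" by (rule scaleC_add_right)
  show "\<And>r x. c *\<^sub>C (r *\<^sub>R x) = r *\<^sub>R (c *\<^sub>C (x::'a))" by (rule scaleC_scaleR_commute)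
  show "\<And>x. norm (c *\<^sub>C (x::'a)) \<le> norm x * cmod c" by (simp add: norm_scaleC mult.commute)
qed

lemma cinner_ext_right: "(\<And>y. cinner x y = cinner x' y) \<Longrightarrow> x = (x'::'a::chilbert)"
proof -
  assume h: "\<And>y. cinner x y = cinner x' y"
  have "cinner (x - x') (x - x') = 0" by (simp add: cinner_diff_left h)
  thus ?thesis by simp
qed

lemma cinner_ext_left: "(\<And>y. cinner y x = cinner y x') \<Longrightarrow> x = (x'::'a::chilbert)"
proof -
  assume h: "\<And>y. cinner y x = cinner y x'"
  have "cinner (x - x') (x - x') = 0" by (simp add: cinner_diff_right h)
  thus ?thesis by simp
qed

lemma parallelogram_law:
  "(norm (a + b))\<^sup>2 + (norm (a - b))\<^sup>2 = 2 * (norm a)\<^sup>2 + 2 * (norm (b::'a::chilbert))\<^sup>2"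
proof -
  have "complex_of_real ((norm (a + b))\<^sup>2 + (norm (a - b))\<^sup>2)
     = cinner (a+b) (a+b) + cinner (a-b) (a-b)" by (simp add: cinner_self)
  also have "\<dots> = 2 * cinner a a + 2 * cinner b b" by (simp add: cinner_simps)
  also have "\<dots> = complex_of_real (2 * (norm a)\<^sup>2 + 2 * (norm b)\<^sup>2)" by (simp add: cinner_self)
  finally show ?thesis using of_real_eq_iff by blast
qed

lemma norm_add_scaleR_square:
  "(norm (u + t *\<^sub>R n))\<^sup>2 = (norm u)\<^sup>2 + 2 * t * Re (cinner n u) + t\<^sup>2 * (norm (n::'a::chilbert))\<^sup>2"
proof -
  have "complex_of_real ((norm (u + t *\<^sub>R n))\<^sup>2) = cinner (u + t *\<^sub>R n) (u + t *\<^sub>R n)"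
    by (simp add: cinner_self)
  also have "\<dots> = cinner u u + t *\<^sub>R cinner n u + t *\<^sub>R cinner u n + t *\<^sub>R t *\<^sub>R cinner n n"
    by (simp add: cinner_simps cinner_scaleR_left cinner_scaleR_right scaleR_add_right)
  finally have "(norm (u + t *\<^sub>R n))\<^sup>2
      = Re (cinner u u + t *\<^sub>R cinner n u + t *\<^sub>R cinner u n + t *\<^sub>R t *\<^sub>R cinner n n)"
    by (metis Re_complex_of_real)
  also have "\<dots> = (norm u)\<^sup>2 + t * Re (cinner n u) + t * Re (cinner u n) + t * t * (norm n)\<^sup>2"
    by (simp add: Re_cinner_self)
  also have "Re (cinner u n) = Re (cinner n u)"
    by (subst cinner_conj) simp
  finally show ?thesis by (simp add: power2_eq_square)
qed

lemma linear_coeff_zero_if_quadratic_nonneg: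
  fixes a b :: real
  assumes b: "0 \<le> b" and h: "\<And>t. 0 \<le> 2 * t * a + t\<^sup>2 * b"
  shows "a = 0"
proof (rule ccontr)
  assume a: "a \<noteq> 0"
  define t where "t = - a / (b + 1)"
  have tb: "t * (b + 1) = - a" using b by (simp add: t_def)
  have "(2 * t * a + t\<^sup>2 * b) * (b + 1)\<^sup>2 = 2 * a * (b + 1) * (t * (b + 1)) + b * (t * (b + 1))\<^sup>2"
    by algebra
  also have "\<dots> = - a\<^sup>2 * (b + 2)" unfolding tb by algebra
  finally have eq: "(2 * t * a + t\<^sup>2 * b) * (b + 1)\<^sup>2 = - a\<^sup>2 * (b + 2)" .
  have "0 \<le> (2 * t * a + t\<^sup>2 * b) * (b + 1)\<^sup>2" using h[of t] by simp
  moreover have "a\<^sup>2 * (b + 2) > 0" using a b by simp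
  ultimately show False using eq by linarith
qed

section \<open>Subspaces and the Riesz representation theorem\<close>

definition csubspace :: "'a::chilbert set \<Rightarrow> bool" where
  "csubspace M \<longleftrightarrow> 0 \<in> M \<and> (\<forall>x\<in>M. \<forall>y\<in>M. x + y \<in> M) \<and> (\<forall>c. \<forall>x\<in>M. c *\<^sub>C x \<in> M)"

lemma csubspace_UNIV [simp]: "csubspace UNIV"
  by (simp add: csubspace_def)

lemma csubspace_0: "csubspace M \<Longrightarrow> 0 \<in> M"
  by (simp add: csubspace_def)

lemma csubspace_add: "csubspace M \<Longrightarrow> x \<in> M \<Longrightarrow> y \<in> M \<Longrightarrow> x + y \<in> M"
  by (simp add: csubspace_def)

lemma csubspace_scaleC: "csubspace M \<Longrightarrow> x \<in> M \<Longrightarrow> c *\<^sub>C x \<in> M"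
  by (simp add: csubspace_def)

lemma csubspace_minus: "csubspace M \<Longrightarrow> x \<in> M \<Longrightarrow> - x \<in> M"
  using csubspace_scaleC[of M x "-1"] by (simp add: scaleC_minus1)

lemma csubspace_diff: "csubspace M \<Longrightarrow> x \<in> M \<Longrightarrow> y \<in> M \<Longrightarrow> x - y \<in> M"
  using csubspace_add[of M x "-y"] csubspace_minus[of M y] by simp

lemma csubspace_scaleR: "csubspace M \<Longrightarrow> x \<in> M \<Longrightarrow> r *\<^sub>R x \<in> M"
  by (simp add: scaleR_eq_scaleC csubspace_scaleC)

lemma norm_diff_square_le_near_min_norm:
  fixes a b :: "'a::chilbert"
  assumes d: "0 \<le> d" "d \<le> norm ((1/2) *\<^sub>R (a + b))"
    and a: "norm a \<le> d + e" and b: "norm b \<le> d + f"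
    and e: "0 \<le> e" "e \<le> 1" and f: "0 \<le> f" "f \<le> 1"
  shows "(norm (a - b))\<^sup>2 \<le> (4 * d + 2) * (e + f)"
proof -
  have "2 * d \<le> norm (a + b)" using d(2) by simp
  hence "(2 * d)\<^sup>2 \<le> (norm (a + b))\<^sup>2" using d(1) by (intro power_mono) auto
  moreover have "(norm a)\<^sup>2 \<le> (d + e)\<^sup>2" "(norm b)\<^sup>2 \<le> (d + f)\<^sup>2"
    using a b by (auto intro: power_mono)
  ultimately have "(norm (a - b))\<^sup>2 \<le> 2 * (d + e)\<^sup>2 + 2 * (d + f)\<^sup>2 - (2 * d)\<^sup>2"
    using parallelogram_law[of a b] by linarith
  also have "\<dots> = 4 * d * e + 2 * e * e + 4 * d * f + 2 * f * f"
    by (simp add: power2_eq_square algebra_simps)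
  also have "\<dots> \<le> (4 * d + 2) * (e + f)"
  proof -
    have "e * e \<le> e * 1" "f * f \<le> f * 1" using e f by (intro mult_left_mono; simp)+
    thus ?thesis by (simp add: algebra_simps)
  qed
  finally show ?thesis .
qed

lemma minimizing_sequence_Cauchy:
  fixes X :: "nat \<Rightarrow> 'a::chilbert"
  assumes mid: "\<And>a b. a \<in> C \<Longrightarrow> b \<in> C \<Longrightarrow> (1/2) *\<^sub>R (a + b) \<in> C"
    and d: "0 \<le> d" "\<And>v. v \<in> C \<Longrightarrow> d \<le> norm v"
    and X: "\<And>n. X n \<in> C" "\<And>n. norm (X n) \<le> d + 1 / (real n + 1)"
  shows "Cauchy X"
proof (rule metric_CauchyI)
  fix r :: real assume r: "0 < r"
  obtain N :: nat where N: "(8 * d + 4) / r\<^sup>2 < real N" using reals_Archimedean2 by blast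
  show "\<exists>M. \<forall>m\<ge>M. \<forall>n\<ge>M. dist (X m) (X n) < r"
  proof (intro exI allI impI)
    fix m n assume mn: "N \<le> m" "N \<le> n"
    define e where "e k = 1 / (real k + 1)" for k :: nat
    have e01: "0 \<le> e k" "e k \<le> 1" for k by (auto simp: e_def field_simps)
    have eN: "e m \<le> 1 / (real N + 1)" "e n \<le> 1 / (real N + 1)"
      using mn by (auto simp: e_def intro!: divide_left_mono)
    have "d \<le> norm ((1/2) *\<^sub>R (X m + X n))" using d(2) mid X(1) by blast
    hence "(norm (X m - X n))\<^sup>2 \<le> (4 * d + 2) * (e m + e n)"
      using X(2) d(1) e01 by (intro norm_diff_square_le_near_min_norm) (auto simp: e_def)
    also have "\<dots> \<le> (4 * d + 2) * (2 / (real N + 1))"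
      using eN d by (intro mult_left_mono) auto
    also have "\<dots> < r\<^sup>2"
    proof -
      have r2: "0 < r\<^sup>2" using r by simp
      have "8 * d + 4 < real N * r\<^sup>2" using N r2 by (simp add: field_simps)
      moreover have "r\<^sup>2 * (real N + 1) = real N * r\<^sup>2 + r\<^sup>2" by (simp add: algebra_simps)
      ultimately have "8 * d + 4 < r\<^sup>2 * (real N + 1)" using r2 by linarith
      thus ?thesis by (simp add: field_simps)
    qed
    finally have "(norm (X m - X n))\<^sup>2 < r\<^sup>2" .
    hence "norm (X m - X n) < r" using r by (simp add: power_less_imp_less_base)
    thus "dist (X m) (X n) < r" by (simp add: dist_norm)
  qed
qed

lemma closed_midpoint_convex_min_norm:
  fixes C :: "'a::chilbert set"
  assumes cl: "closed C" and ne: "C \<noteq> {}"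
    and mid: "\<And>a b. a \<in> C \<Longrightarrow> b \<in> C \<Longrightarrow> (1/2) *\<^sub>R (a + b) \<in> C"
  shows "\<exists>u\<in>C. \<forall>v\<in>C. norm u \<le> norm v"
proof -
  define d where "d = Inf (norm ` C)"
  have bdd: "bdd_below (norm ` C)" by (rule bdd_belowI[of _ 0]) auto
  have dle: "d \<le> norm v" if "v \<in> C" for v
    unfolding d_def using bdd that by (auto intro: cInf_lower)
  have d0: "0 \<le> d" unfolding d_def using ne by (auto intro!: cInf_greatest)
  have "\<exists>x\<in>C. norm x < d + 1 / (real n + 1)" for n :: nat
  proof -
    have "Inf (norm ` C) < d + 1 / (real n + 1)" unfolding d_def by (simp add: add_pos_pos)
    then obtain r where "r \<in> norm ` C" "r < d + 1 / (real n + 1)"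
      using ne by (metis cInf_lessD empty_is_image)
    thus ?thesis by auto
  qed
  then obtain X where XC: "\<And>n. X n \<in> C" and Xlt: "\<And>n. norm (X n) < d + 1 / (real n + 1)"
    by metis
  have "Cauchy X"
    using Xlt by (intro minimizing_sequence_Cauchy[OF mid d0 dle XC] less_imp_le)
  then obtain L where L: "X \<longlonglongrightarrow> L" using Cauchy_convergent_iff convergent_def by blast
  have LC: "L \<in> C" using closed_sequential_limits[of C] cl XC L by blast
  have "(\<lambda>n. norm (X n)) \<longlonglongrightarrow> norm L" using L by (rule tendsto_norm)
  moreover have "(\<lambda>n. norm (X n)) \<longlonglongrightarrow> d"
  proof (rule real_tendsto_sandwich[where f="\<lambda>n. d" and h="\<lambda>n. d + 1 / (real n + 1)"])
    show "\<forall>\<^sub>F n in sequentially. d \<le> norm (X n)" using dle XC by auto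
    show "\<forall>\<^sub>F n in sequentially. norm (X n) \<le> d + 1 / (real n + 1)"
      using Xlt by (intro always_eventually allI less_imp_le)
    have "(\<lambda>n. 1 / (real n + 1)) \<longlonglongrightarrow> 0"
      using LIMSEQ_inverse_real_of_nat by (simp add: inverse_eq_divide add.commute)
    thus "(\<lambda>n. d + 1 / (real n + 1)) \<longlonglongrightarrow> d"
      using tendsto_add[of "\<lambda>n. d" d sequentially] by force
  qed simp
  ultimately have "norm L = d" by (rule LIMSEQ_unique)
  thus ?thesis using LC dle by auto
qed

lemma min_norm_orthogonal:
  fixes u :: "'a::chilbert"
  assumes N: "csubspace N" and n: "n \<in> N" and min: "\<And>m. m \<in> N \<Longrightarrow> norm u \<le> norm (u + m)"
  shows "cinner n u = 0"
proof -
  have Re0: "Re (cinner m u) = 0" if m: "m \<in> N" for m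
  proof (rule linear_coeff_zero_if_quadratic_nonneg)
    show "0 \<le> (norm m)\<^sup>2" by simp
    fix t :: real
    have "norm u \<le> norm (u + t *\<^sub>R m)" using min csubspace_scaleR[OF N m] by blast
    hence "(norm u)\<^sup>2 \<le> (norm (u + t *\<^sub>R m))\<^sup>2" by (simp add: power_mono)
    thus "0 \<le> 2 * t * Re (cinner m u) + t\<^sup>2 * (norm m)\<^sup>2" by (simp add: norm_add_scaleR_square)
  qed
  have "Re (cinner n u) = 0" "Re (cinner (\<i> *\<^sub>C n) u) = 0"
    using Re0 n csubspace_scaleC[OF N n] by auto
  thus ?thesis by (simp add: cinner_scaleC_left complex_eq_iff)
qed

lemma continuous_on_bounded_additive:
  fixes \<phi> :: "'a::chilbert \<Rightarrow> 'b::real_normed_vector"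
  assumes sM: "csubspace M"
    and add: "\<And>x y. x \<in> M \<Longrightarrow> y \<in> M \<Longrightarrow> \<phi> (x + y) = \<phi> x + \<phi> y"
    and bnd: "\<And>x. x \<in> M \<Longrightarrow> norm (\<phi> x) \<le> K * norm x"
  shows "continuous_on M \<phi>"
proof -
  have "(max K 0)-lipschitz_on M \<phi>"
  proof (rule lipschitz_onI)
    fix x y assume xy: "x \<in> M" "y \<in> M"
    hence "\<phi> (x - y) = \<phi> x - \<phi> y"
      using add[of y "x - y"] csubspace_diff[OF sM] by (simp add: algebra_simps)
    moreover have "norm (\<phi> (x - y)) \<le> max K 0 * norm (x - y)"
      using bnd[of "x - y"] csubspace_diff[OF sM xy] mult_right_mono[of K "max K 0" "norm (x - y)"]
      by simp
    ultimately show "dist (\<phi> x) (\<phi> y) \<le> max K 0 * dist x y" by (simp add: dist_norm)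
  qed auto
  thus ?thesis by (rule lipschitz_on_continuous_on)
qed

text \<open>The representing vector is a multiple of the element of least norm in the
  closed affine subspace \<open>{x \<in> M. \<phi> x = \<phi> x0}\<close>, which is orthogonal to \<open>ker \<phi>\<close>.\<close>

lemma Riesz_representation:
  fixes M :: "'a::chilbert set" and \<phi> :: "'a \<Rightarrow> complex"
  assumes clM: "closed M" and sM: "csubspace M"
    and add: "\<And>x y. x \<in> M \<Longrightarrow> y \<in> M \<Longrightarrow> \<phi> (x + y) = \<phi> x + \<phi> y"
    and hom: "\<And>c x. x \<in> M \<Longrightarrow> \<phi> (c *\<^sub>C x) = c * \<phi> x"
    and bnd: "\<And>x. x \<in> M \<Longrightarrow> cmod (\<phi> x) \<le> K * norm x"
  shows "\<exists>w\<in>M. \<forall>x\<in>M. \<phi> x = cinner x w"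
proof (cases "\<forall>x\<in>M. \<phi> x = 0")
  case True
  thus ?thesis using csubspace_0[OF sM] by (intro bexI[of _ 0]) auto
next
  case False
  then obtain x0 where x0M: "x0 \<in> M" and x0: "\<phi> x0 \<noteq> 0" by auto
  have "continuous_on M \<phi>" using sM add bnd by (rule continuous_on_bounded_additive)
  define C where "C = M \<inter> \<phi> -` {\<phi> x0}"
  have clC: "closed C" unfolding C_def using \<open>continuous_on M \<phi>\<close> clM
    by (rule continuous_closed_preimage) simp
  have midC: "(1/2) *\<^sub>R (a + b) \<in> C" if "a \<in> C" "b \<in> C" for a b
  proof -
    have ab: "a + b \<in> M" "\<phi> (a + b) = 2 * \<phi> x0"
      using that csubspace_add[OF sM] add by (auto simp: C_def)
    hence "\<phi> ((1/2) *\<^sub>R (a + b)) = \<phi> x0"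
      using hom[of "a + b" "1/2"] by (simp add: scaleR_eq_scaleC)
    thus ?thesis using csubspace_scaleR[OF sM ab(1)] by (simp add: C_def)
  qed
  obtain u where uC: "u \<in> C" and umin: "\<And>v. v \<in> C \<Longrightarrow> norm u \<le> norm v"
    using closed_midpoint_convex_min_norm[OF clC _ midC] x0M by (auto simp: C_def)
  have uM: "u \<in> M" and phiu: "\<phi> u = \<phi> x0" using uC by (auto simp: C_def)
  define N where "N = M \<inter> \<phi> -` {0}"
  have sN: "csubspace N"
    using sM hom[of x0 0] x0M by (auto simp: N_def csubspace_def add hom)
  have orth: "cinner n u = 0" if "n \<in> N" for n
  proof (rule min_norm_orthogonal[OF sN that])
    fix m assume "m \<in> N"
    hence "u + m \<in> C" using uM phiu add csubspace_add[OF sM] by (auto simp: N_def C_def)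
    thus "norm u \<le> norm (u + m)" by (rule umin)
  qed
  have uu: "cinner u u \<noteq> 0" using phiu x0 hom[OF uM, of 0] by auto
  define w where "w = (cnj (\<phi> u) / cinner u u) *\<^sub>C u"
  have diff: "\<phi> (x - y) = \<phi> x - \<phi> y" if "x \<in> M" "y \<in> M" for x y
    using that add[of y "x - y"] csubspace_diff[OF sM] by (simp add: algebra_simps)
  have "\<phi> x = cinner x w" if xM: "x \<in> M" for x
  proof -
    define n where "n = x - (\<phi> x / \<phi> u) *\<^sub>C u"
    have "n \<in> N" using xM uM phiu x0
      by (simp add: n_def N_def diff hom csubspace_diff csubspace_scaleC sM)
    hence "cinner n u = 0" by (rule orth)
    hence "cinner x u = (\<phi> x / \<phi> u) * cinner u u"
      by (simp add: n_def cinner_diff_left cinner_scaleC_left)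
    thus ?thesis
      using uu x0 phiu cinner_conj[of u u] by (simp add: w_def cinner_scaleC_right)
  qed
  thus ?thesis using csubspace_scaleC[OF sM uM] by (auto simp: w_def)
qed

lemma adjoint_on_unique:
  assumes sM: "csubspace M" and w1: "w1 \<in> M" and w2: "w2 \<in> M"
    and h1: "\<forall>x\<in>M. cinner (T x) y = cinner x w1"
    and h2: "\<forall>x\<in>M. cinner (T x) y = cinner x (w2::'a::chilbert)"
  shows "w1 = w2"
proof -
  have "w1 - w2 \<in> M" using sM w1 w2 by (rule csubspace_diff)
  hence "cinner (w1 - w2) w1 = cinner (w1 - w2) w2" using h1 h2 by metis
  hence "cinner (w1 - w2) (w1 - w2) = 0" by (simp add: cinner_diff_right)
  thus ?thesis by simp
qed

lemma adjoint_on_eqI: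
  assumes sM: "csubspace M" and wM: "w \<in> M"
    and h: "\<forall>x\<in>M. cinner (T x) y = cinner x (w::'a::chilbert)"
  shows "adjoint_on M T y = w"
  unfolding adjoint_on_def
  using adjoint_on_unique[OF sM _ wM _ h] wM h by (intro the_equality) auto

lemma adjoint_on_exists:
  assumes clM: "closed M" and sM: "csubspace M" and T: "bounded_op_on M (T::'a::chilbert \<Rightarrow> 'a)"
  shows "\<exists>w\<in>M. \<forall>x\<in>M. cinner (T x) y = cinner x w"
proof -
  from T obtain K where lin: "clinear_on M T" and K: "\<forall>x\<in>M. norm (T x) \<le> K * norm x"
    by (auto simp: bounded_op_on_def)
  show ?thesis
  proof (rule Riesz_representation[OF clM sM, where K="K * norm y"])
    show "cinner (T (x + z)) y = cinner (T x) y + cinner (T z) y" if "x \<in> M" "z \<in> M" for x z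
      using lin that by (simp add: clinear_on_def cinner_add_left)
    show "cinner (T (c *\<^sub>C x)) y = c * cinner (T x) y" if "x \<in> M" for c x
      using lin that by (simp add: clinear_on_def cinner_scaleC_left)
    show "cmod (cinner (T x) y) \<le> K * norm y * norm x" if "x \<in> M" for x
    proof -
      have "cmod (cinner (T x) y) \<le> norm (T x) * norm y" by (rule Cauchy_Schwarz_cinner)
      also have "\<dots> \<le> K * norm x * norm y" using K that by (intro mult_right_mono) auto
      finally show ?thesis by (simp add: algebra_simps)
    qed
  qed
qed

lemma
  assumes "closed M" and sM: "csubspace M" and "bounded_op_on M (T::'a::chilbert \<Rightarrow> 'a)"
  shows adjoint_on_in: "adjoint_on M T y \<in> M"
    and cinner_adjoint_on: "x \<in> M \<Longrightarrow> cinner (T x) y = cinner x (adjoint_on M T y)"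
proof -
  obtain w where "w \<in> M" "\<forall>x\<in>M. cinner (T x) y = cinner x w"
    using adjoint_on_exists[OF assms] by blast
  moreover from this have "adjoint_on M T y = w" by (intro adjoint_on_eqI[OF sM])
  ultimately show "adjoint_on M T y \<in> M" "x \<in> M \<Longrightarrow> cinner (T x) y = cinner x (adjoint_on M T y)"
    by auto
qed

lemma adjoint_on_add:
  assumes "closed M" and sM: "csubspace M" and "bounded_op_on M (T::'a::chilbert \<Rightarrow> 'a)"
  shows "adjoint_on M T (y1 + y2) = adjoint_on M T y1 + adjoint_on M T y2"
  using adjoint_on_in[OF assms] cinner_adjoint_on[OF assms]
  by (intro adjoint_on_eqI[OF sM]) (auto simp: cinner_add_right csubspace_add[OF sM])

lemma adjoint_on_scaleC:
  assumes "closed M" and sM: "csubspace M" and "bounded_op_on M (T::'a::chilbert \<Rightarrow> 'a)"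
  shows "adjoint_on M T (c *\<^sub>C y) = c *\<^sub>C adjoint_on M T y"
  using adjoint_on_in[OF assms] cinner_adjoint_on[OF assms]
  by (intro adjoint_on_eqI[OF sM]) (auto simp: cinner_scaleC_right csubspace_scaleC[OF sM])

lemma adjoint_on_minus:
  assumes "closed M" and "csubspace M" and "bounded_op_on M (T::'a::chilbert \<Rightarrow> 'a)"
  shows "adjoint_on M T (- y) = - adjoint_on M T y"
  using adjoint_on_scaleC[OF assms, of "-1" y] by (simp add: scaleC_minus1)

lemma adjoint_on_diff:
  assumes "closed M" and "csubspace M" and "bounded_op_on M (T::'a::chilbert \<Rightarrow> 'a)"
  shows "adjoint_on M T (y1 - y2) = adjoint_on M T y1 - adjoint_on M T y2"
  using adjoint_on_add[OF assms, of y1 "-y2"] adjoint_on_minus[OF assms, of y2] by simp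

lemma bop_add: "bop T \<Longrightarrow> T (x + y) = T x + T (y::'a::chilbert)"
  by (simp add: bounded_op_on_def clinear_on_def)

lemma bop_scaleC: "bop T \<Longrightarrow> T (c *\<^sub>C x) = c *\<^sub>C T (x::'a::chilbert)"
  by (simp add: bounded_op_on_def clinear_on_def)

lemma bop_zero: "bop T \<Longrightarrow> T 0 = (0::'a::chilbert)"
  using bop_scaleC[of T 0 0] by simp

lemma bop_minus: "bop T \<Longrightarrow> T (- x) = - T (x::'a::chilbert)"
  using bop_scaleC[of T "-1" x] by (simp add: scaleC_minus1)

lemma bop_diff: "bop T \<Longrightarrow> T (x - y) = T x - T (y::'a::chilbert)"
  using bop_add[of T x "-y"] bop_minus[of T y] by simp

lemma bop_scaleR: "bop T \<Longrightarrow> T (r *\<^sub>R x) = r *\<^sub>R T (x::'a::chilbert)"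
  by (simp add: scaleR_eq_scaleC bop_scaleC)

lemma bop_bound: "bop T \<Longrightarrow> \<exists>K\<ge>0. \<forall>x. norm (T x) \<le> K * norm (x::'a::chilbert)"
proof -
  assume "bop T"
  then obtain K where K: "\<forall>x. norm (T x) \<le> K * norm x" by (auto simp: bounded_op_on_def)
  have "norm (T x) \<le> max K 0 * norm x" for x
    using K[rule_format, of x] mult_right_mono[of K "max K 0" "norm x"] by simp
  thus ?thesis by (intro exI[of _ "max K 0"]) auto
qed

lemma bop_bounded_linear: "bop T \<Longrightarrow> bounded_linear (T::'a::chilbert \<Rightarrow> 'a)"
proof -
  assume T: "bop T"
  then obtain K where K: "\<forall>x. norm (T x) \<le> K * norm x" by (auto simp: bounded_op_on_def)
  show ?thesis
  proof (rule bounded_linear_intro[where K=K])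
    show "T (x + y) = T x + T y" for x y using T by (rule bop_add)
    show "T (r *\<^sub>R x) = r *\<^sub>R T x" for r x using T by (rule bop_scaleR)
    show "norm (T x) \<le> norm x * K" for x using K by (simp add: mult.commute)
  qed
qed

lemma bop_id: "bop (\<lambda>x::'a::chilbert. x)"
  by (auto simp: bounded_op_on_def clinear_on_def intro: exI[of _ 1])

lemma bop_comp: "bop S \<Longrightarrow> bop T \<Longrightarrow> bop (\<lambda>x. S (T (x::'a::chilbert)))"
proof -
  assume S: "bop S" and T: "bop T"
  obtain K where K: "K \<ge> 0" "\<forall>x. norm (S x) \<le> K * norm x" using bop_bound[OF S] by blast
  obtain L where L: "\<forall>x. norm (T x) \<le> L * norm x" using bop_bound[OF T] by blast
  have "norm (S (T x)) \<le> (K * L) * norm x" for x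
  proof -
    have "norm (S (T x)) \<le> K * norm (T x)" using K by blast
    also have "\<dots> \<le> K * (L * norm x)" using K L by (intro mult_left_mono) auto
    finally show ?thesis by (simp add: mult.assoc)
  qed
  thus ?thesis
    using S T by (auto simp: bounded_op_on_def clinear_on_def bop_add[OF S] bop_add[OF T]
        bop_scaleC[OF S] bop_scaleC[OF T])
qed

lemma bop_funpow: "bop T \<Longrightarrow> bop (T ^^ n :: 'a::chilbert \<Rightarrow> 'a)"
proof (induction n)
  case 0 thus ?case using bop_id by (simp add: id_def)
next
  case (Suc n)
  hence "bop (\<lambda>x. T ((T ^^ n) x))" using bop_comp by blast
  thus ?case by (simp add: comp_def)
qed

lemma cinner_adj_right: "bop T \<Longrightarrow> cinner (T x) y = cinner x (adj T (y::'a::chilbert))"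
  using cinner_adjoint_on[OF closed_UNIV csubspace_UNIV] by (simp add: adj_def)

lemma cinner_adj_left: "bop T \<Longrightarrow> cinner x (T y) = cinner (adj T x) (y::'a::chilbert)"
  using cinner_adj_right[of T y x] cinner_conj[of x "T y"] cinner_conj[of "adj T x" y] by simp

lemma adj_norm_le:
  assumes T: "bop (T::'a::chilbert \<Rightarrow> 'a)" and K: "K \<ge> 0" "\<And>x. norm (T x) \<le> K * norm x"
  shows "norm (adj T y) \<le> K * norm y"
proof (cases "adj T y = 0")
  case True thus ?thesis using K by simp
next
  case False
  have "(norm (adj T y))\<^sup>2 = Re (cinner (adj T y) (adj T y))" by (simp add: Re_cinner_self)
  also have "\<dots> = Re (cinner (T (adj T y)) y)" by (simp add: cinner_adj_right[OF T])
  also have "\<dots> \<le> cmod (cinner (T (adj T y)) y)" by (rule complex_Re_le_cmod)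
  also have "\<dots> \<le> norm (T (adj T y)) * norm y" by (rule Cauchy_Schwarz_cinner)
  also have "\<dots> \<le> K * norm (adj T y) * norm y" using K by (intro mult_right_mono) auto
  finally have "norm (adj T y) * norm (adj T y) \<le> norm (adj T y) * (K * norm y)"
    by (simp add: power2_eq_square algebra_simps)
  thus ?thesis using False by simp
qed

lemma bop_adj:
  assumes T: "bop (T::'a::chilbert \<Rightarrow> 'a)"
  shows "bop (adj T)"
proof -
  obtain K where "K \<ge> 0" "\<forall>x. norm (T x) \<le> K * norm x" using bop_bound[OF T] by blast
  hence "norm (adj T y) \<le> K * norm y" for y using adj_norm_le[OF T] by blast
  moreover have "adj T (x + y) = adj T x + adj T y" for x y
    by (rule cinner_ext_left) (simp add: cinner_adj_right[OF T, symmetric] cinner_add_right)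
  moreover have "adj T (c *\<^sub>C x) = c *\<^sub>C adj T x" for c x
    by (rule cinner_ext_left) (simp add: cinner_adj_right[OF T, symmetric] cinner_scaleC_right)
  ultimately show ?thesis by (auto simp: bounded_op_on_def clinear_on_def)
qed

lemma adj_adj:
  assumes T: "bop (T::'a::chilbert \<Rightarrow> 'a)"
  shows "adj (adj T) = T"
proof
  fix y
  show "adj (adj T) y = T y"
    unfolding adj_def
    by (rule adjoint_on_eqI) (auto simp: cinner_adj_left[OF T, symmetric] adj_def[symmetric])
qed

lemma adj_commute:
  assumes S: "bop S" and T: "bop (T::'a::chilbert \<Rightarrow> 'a)" and ST: "\<And>x. S (T x) = T (S x)"
  shows "adj S (adj T x) = adj T (adj S x)"
proof (rule cinner_ext_left)
  fix y
  have "cinner y (adj S (adj T x)) = cinner (T (S y)) x"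
    by (simp add: cinner_adj_right[OF S, symmetric] cinner_adj_right[OF T, symmetric])
  also have "\<dots> = cinner y (adj T (adj S x))"
    by (simp add: cinner_adj_right[OF S] cinner_adj_right[OF T] flip: ST)
  finally show "cinner y (adj S (adj T x)) = cinner y (adj T (adj S x))" .
qed

lemma norm_adj_le_if_contraction:
  assumes "bop T" and "\<And>x. norm (T x) \<le> norm (x::'a::chilbert)"
  shows "norm (adj T y) \<le> norm y"
  using adj_norm_le[OF assms(1), of 1] assms(2) by simp

lemma positive_op_selfadjoint:
  assumes A: "positive_op (A::'a::chilbert \<Rightarrow> 'a)"
  shows "cinner (A x) y = cinner x (A y)"
proof -
  have bA: "bop A" and q: "\<And>v. Im (cinner (A v) v) = 0" using A by (auto simp: positive_op_def)
  define a where "a = cinner (A x) y"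
  define b where "b = cinner (A y) x"
  have e1: "cinner (A (x + y)) (x + y) = cinner (A x) x + cinner (A y) y + a + b"
    by (simp add: bop_add[OF bA] cinner_simps a_def b_def)
  have e2: "cinner (A (x + \<i> *\<^sub>C y)) (x + \<i> *\<^sub>C y)
      = cinner (A x) x + cinner (A y) y - \<i> * a + \<i> * b"
    by (simp add: bop_add[OF bA] bop_scaleC[OF bA] cinner_simps a_def b_def algebra_simps)
  have "Im (a + b) = 0" using e1 q[of "x + y"] q[of x] q[of y] by simp
  moreover have "Re (b - a) = 0" using e2 q[of "x + \<i> *\<^sub>C y"] q[of x] q[of y] by simp
  ultimately have "b = cnj a" by (simp add: complex_eq_iff)
  thus ?thesis using cinner_conj[of x "A y"] by (simp add: a_def b_def)
qed

lemma positive_op_form_zero: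
  assumes A: "positive_op (A::'a::chilbert \<Rightarrow> 'a)" and z: "cinner (A y) y = 0"
  shows "A y = 0"
proof -
  have bA: "bop A" and q: "\<And>v. 0 \<le> Re (cinner (A v) v)" using A by (auto simp: positive_op_def)
  define w where "w = A y"
  have "Re (cinner (A y) w) = 0"
  proof (rule linear_coeff_zero_if_quadratic_nonneg)
    show "0 \<le> Re (cinner (A w) w)" by (rule q)
    fix t :: real
    have "cinner (A (y + t *\<^sub>R w)) (y + t *\<^sub>R w)
       = cinner (A y) y + t *\<^sub>R cinner (A y) w + t *\<^sub>R cinner (A w) y + t *\<^sub>R t *\<^sub>R cinner (A w) w"
      by (simp add: bop_add[OF bA] bop_scaleR[OF bA] cinner_simps cinner_scaleR_left
          cinner_scaleR_right scaleR_add_right)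
    also have "cinner (A w) y = cnj (cinner (A y) w)"
      by (simp add: positive_op_selfadjoint[OF A] cinner_conj[of w "A y"])
    finally have "Re (cinner (A (y + t *\<^sub>R w)) (y + t *\<^sub>R w))
        = 2 * t * Re (cinner (A y) w) + t\<^sup>2 * Re (cinner (A w) w)"
      using z by (simp add: power2_eq_square)
    thus "0 \<le> 2 * t * Re (cinner (A y) w) + t\<^sup>2 * Re (cinner (A w) w)" using q by metis
  qed
  thus ?thesis by (simp add: Re_cinner_self w_def)
qed

section \<open>The square root of \<open>1 - t\<close> as a power series\<close>

definition sqrt_coeff :: "nat \<Rightarrow> real" where
  "sqrt_coeff n = (-1) ^ n * ((1/2::real) gchoose n)"

text \<open>\<open>sqrt_coeff_sum n\<close> is the partial sum \<open>\<Sum>k\<le>n. sqrt_coeff k\<close>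
  (see \<open>sum_sqrt_coeff\<close>); its product form shows that it is positive.\<close>

fun sqrt_coeff_sum :: "nat \<Rightarrow> real" where
  "sqrt_coeff_sum 0 = 1"
| "sqrt_coeff_sum (Suc n) = sqrt_coeff_sum n * (2 * real n + 1) / (2 * real n + 2)"

lemma sqrt_coeff_sum_pos: "0 < sqrt_coeff_sum n"
  by (induction n) auto

lemma sqrt_coeff_0 [simp]: "sqrt_coeff 0 = 1"
  by (simp add: sqrt_coeff_def)

lemma sqrt_coeff_Suc_rec: "sqrt_coeff (Suc n) = sqrt_coeff n * (real n - 1/2) / (real n + 1)"
proof -
  have "(1/2::real) * ((1/2) gchoose n) = real n * ((1/2) gchoose n) + real (Suc n) * ((1/2) gchoose Suc n)"
    by (rule gbinomial_mult_1)
  hence rec: "(1/2::real) gchoose Suc n = ((1/2) gchoose n) * (1/2 - real n) / (real n + 1)"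
    by (simp add: field_simps)
  show ?thesis by (simp add: sqrt_coeff_def rec field_simps)
qed

lemma sqrt_coeff_Suc: "sqrt_coeff (Suc n) = - sqrt_coeff_sum n / (2 * real n + 2)"
proof (induction n)
  case 0 thus ?case by (simp add: sqrt_coeff_Suc_rec)
next
  case (Suc n)
  have "sqrt_coeff (Suc (Suc n)) = sqrt_coeff (Suc n) * (real (Suc n) - 1/2) / (real (Suc n) + 1)"
    by (rule sqrt_coeff_Suc_rec)
  also have "\<dots> = - sqrt_coeff_sum (Suc n) / (2 * real (Suc n) + 2)"
    unfolding Suc by (simp add: field_simps)
  finally show ?case .
qed

lemma sqrt_coeff_Suc_nonpos: "sqrt_coeff (Suc n) \<le> 0"
  using sqrt_coeff_sum_pos[of n] by (simp add: sqrt_coeff_Suc divide_nonpos_pos)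

lemma sum_sqrt_coeff: "(\<Sum>k<Suc n. sqrt_coeff k) = sqrt_coeff_sum n"
  by (induction n) (simp_all add: sqrt_coeff_Suc field_simps)

lemma summable_abs_sqrt_coeff: "summable (\<lambda>n. \<bar>sqrt_coeff n\<bar>)"
proof -
  have "summable (\<lambda>n. - sqrt_coeff (Suc n))"
  proof (rule summableI_nonneg_bounded[where x=1])
    show "0 \<le> - sqrt_coeff (Suc n)" for n using sqrt_coeff_Suc_nonpos[of n] by simp
    show "(\<Sum>k<n. - sqrt_coeff (Suc k)) \<le> 1" for n
      using sum.lessThan_Suc_shift[of sqrt_coeff n] sum_sqrt_coeff[of n] sqrt_coeff_sum_pos[of n]
      by (simp add: sum_negf)
  qed
  hence "summable (\<lambda>n. \<bar>sqrt_coeff (Suc n)\<bar>)"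
    using sqrt_coeff_Suc_nonpos by (simp add: abs_of_nonpos)
  thus ?thesis using summable_Suc_iff by blast
qed

lemma summable_sqrt_coeff: "summable sqrt_coeff"
  using summable_abs_sqrt_coeff summable_rabs_cancel by blast

lemma suminf_sqrt_coeff_nonneg: "0 \<le> suminf sqrt_coeff"
proof -
  have "(\<lambda>n. \<Sum>k<n. sqrt_coeff k) \<longlonglongrightarrow> suminf sqrt_coeff"
    using summable_sqrt_coeff by (rule summable_LIMSEQ)
  moreover have "0 \<le> (\<Sum>k<n. sqrt_coeff k)" for n
    by (cases n) (auto simp: sum_sqrt_coeff sqrt_coeff_sum_pos less_imp_le simp del: sum.lessThan_Suc)
  ultimately show ?thesis by (intro LIMSEQ_le_const) auto
qed

text \<open>The Cauchy square of the series is \<open>1 - t\<close>; this is Vandermonde's identity.\<close>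

lemma sqrt_coeff_convolution:
  "(\<Sum>i\<le>k. sqrt_coeff i * sqrt_coeff (k - i)) = (if k = 0 then 1 else if k = 1 then -1 else 0)"
proof -
  have "(\<Sum>i\<le>k. sqrt_coeff i * sqrt_coeff (k - i))
      = (\<Sum>i\<le>k. (-1)^k * (((1/2::real) gchoose i) * ((1/2) gchoose (k - i))))"
    by (intro sum.cong refl) (simp add: sqrt_coeff_def power_add[symmetric])
  also have "\<dots> = (-1)^k * (\<Sum>i=0..k. ((1/2::real) gchoose i) * ((1/2) gchoose (k - i)))"
    by (simp add: sum_distrib_left atLeast0AtMost)
  also have "\<dots> = (-1)^k * ((1::real) gchoose k)"
    using gbinomial_Vandermonde[of "1/2::real" "1/2" k] by simp
  also have "(1::real) gchoose k = real (1 choose k)"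
    using binomial_gbinomial[of 1 k, where 'a=real] by simp
  finally show ?thesis
    by (cases k) (auto simp: binomial_eq_0)
qed

lemma Cauchy_product_tail_tendsto_0:
  fixes f g :: "nat \<Rightarrow> real"
  assumes f: "summable f" "\<And>k. 0 \<le> f k" and g: "summable g" "\<And>k. 0 \<le> g k"
  shows "(\<lambda>n. \<Sum>(i,j)\<in>{..<n} \<times> {..<n} - {(i,j). i + j < n}. f i * g j) \<longlonglongrightarrow> 0"
proof -
  let ?S1 = "\<lambda>n::nat. {..<n} \<times> {..<n}"
  let ?S2 = "\<lambda>n::nat. {(i,j). i + j < n}"
  let ?h = "\<lambda>(i,j). f i * g j"
  have h_nonneg: "0 \<le> ?h x" for x using f g by (simp add: case_prod_beta)
  have "(\<lambda>n. (\<Sum>k<n. f k) * (\<Sum>k<n. g k)) \<longlonglongrightarrow> (\<Sum>k. f k) * (\<Sum>k. g k)"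
    using f g by (intro tendsto_mult summable_LIMSEQ)
  hence "convergent (\<lambda>n. sum ?h (?S1 n))"
    by (simp only: sum_product sum.Sigma [rule_format] finite_lessThan) (rule convergentI)
  hence Cauchy: "Cauchy (\<lambda>n. sum ?h (?S1 n))" by (rule convergent_Cauchy)
  show ?thesis
  proof (rule LIMSEQ_I)
    fix r :: real assume r: "0 < r"
    obtain N where N: "\<forall>m\<ge>N. \<forall>n\<ge>N. norm (sum ?h (?S1 m) - sum ?h (?S1 n)) < r"
      using CauchyD[OF Cauchy r] by blast
    have "norm (sum ?h (?S1 n - ?S2 n) - 0) < r" if n: "2 * N \<le> n" for n
    proof -
      have "sum ?h (?S1 n - ?S2 n) \<le> sum ?h (?S1 n - ?S1 (n div 2))"
        using h_nonneg by (intro sum_mono2) auto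
      also have "\<dots> = sum ?h (?S1 n) - sum ?h (?S1 (n div 2))"
        by (intro sum_diff) auto
      also have "\<dots> < r"
      proof -
        have "N \<le> n" "N \<le> n div 2" using n by auto
        hence "norm (sum ?h (?S1 n) - sum ?h (?S1 (n div 2))) < r" using N by blast
        thus ?thesis by (simp add: abs_less_iff)
      qed
      finally show ?thesis using h_nonneg by (simp add: sum_nonneg)
    qed
    thus "\<exists>N. \<forall>n\<ge>N. norm (sum ?h (?S1 n - ?S2 n) - 0) < r" by blast
  qed
qed

lemma Cauchy_product_sums_bounded_bilinear:
  fixes a :: "nat \<Rightarrow> 'a::banach" and b :: "nat \<Rightarrow> 'b::banach"
    and prod :: "'a \<Rightarrow> 'b \<Rightarrow> 'c::banach"
  assumes bb: "bounded_bilinear prod"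
    and a: "summable (\<lambda>k. norm (a k))" and b: "summable (\<lambda>k. norm (b k))"
  shows "(\<lambda>k. \<Sum>i\<le>k. prod (a i) (b (k - i))) sums (prod (\<Sum>k. a k) (\<Sum>k. b k))"
proof -
  interpret bounded_bilinear prod by (rule bb)
  obtain K where K: "\<And>x y. norm (prod x y) \<le> norm x * norm y * K" using pos_bounded by blast
  let ?S1 = "\<lambda>n::nat. {..<n} \<times> {..<n}"
  let ?S2 = "\<lambda>n::nat. {(i,j). i + j < n}"
  let ?g = "\<lambda>(i,j). prod (a i) (b j)"
  let ?f = "\<lambda>(i,j). norm (a i) * norm (b j)"
  have S2_S1: "?S2 n \<subseteq> ?S1 n" for n by auto
  have "prod (\<Sum>k<n. a k) (\<Sum>k<n. b k) = sum ?g (?S1 n)" for n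
  proof -
    have "prod (\<Sum>k<n. a k) (\<Sum>k<n. b k) = (\<Sum>i<n. prod (a i) (\<Sum>k<n. b k))"
      by (rule sum_left)
    also have "\<dots> = (\<Sum>i<n. \<Sum>j<n. prod (a i) (b j))" by (simp only: sum_right)
    also have "\<dots> = sum ?g (?S1 n)" by (rule sum.cartesian_product)
    finally show ?thesis .
  qed
  moreover have "(\<lambda>n. prod (\<Sum>k<n. a k) (\<Sum>k<n. b k)) \<longlonglongrightarrow> prod (\<Sum>k. a k) (\<Sum>k. b k)"
    by (intro tendsto summable_LIMSEQ summable_norm_cancel[OF a] summable_norm_cancel[OF b])
  ultimately have 1: "(\<lambda>n. sum ?g (?S1 n)) \<longlonglongrightarrow> prod (\<Sum>k. a k) (\<Sum>k. b k)" by simp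
  have tail: "(\<lambda>n. K * sum ?f (?S1 n - ?S2 n)) \<longlonglongrightarrow> 0"
    using tendsto_mult_right_zero[OF Cauchy_product_tail_tendsto_0[OF a _ b]] by simp
  have "norm (sum ?g (?S1 n - ?S2 n)) \<le> K * sum ?f (?S1 n - ?S2 n)" for n
  proof -
    have "norm (sum ?g (?S1 n - ?S2 n)) \<le> (\<Sum>x\<in>?S1 n - ?S2 n. norm (?g x))" by (rule norm_sum)
    also have "\<dots> \<le> (\<Sum>x\<in>?S1 n - ?S2 n. K * ?f x)"
      using K by (intro sum_mono) (auto simp: mult.commute mult.left_commute)
    finally show ?thesis by (simp add: sum_distrib_left)
  qed
  hence "(\<lambda>n. sum ?g (?S1 n - ?S2 n)) \<longlonglongrightarrow> 0"
    by (intro Lim_null_comparison[OF _ tail] always_eventually) blast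
  hence "(\<lambda>n. sum ?g (?S1 n) - sum ?g (?S2 n)) \<longlonglongrightarrow> 0"
    by (simp add: sum_diff S2_S1)
  with 1 have "(\<lambda>n. sum ?g (?S2 n)) \<longlonglongrightarrow> prod (\<Sum>k. a k) (\<Sum>k. b k)"
    by (rule Lim_transform2)
  thus ?thesis by (simp only: sums_def sum.triangle_reindex)
qed

section \<open>The defect operator of a contraction\<close>

locale contraction =
  fixes T :: "'a::chilbert \<Rightarrow> 'a"
  assumes bop_T: "bop T" and norm_T_le: "\<And>x. norm (T x) \<le> norm x"
begin

definition gram :: "'a \<Rightarrow> 'a" where "gram x = adj T (T x)"

text \<open>The candidate for \<open>(I - T\<^sup>* T)\<^sup>1\<^sup>/\<^sup>2\<close>, obtained by substituting \<open>T\<^sup>* T\<close> into the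
  power series of \<open>\<surd>(1 - t)\<close>.\<close>

definition defect_series :: "'a \<Rightarrow> 'a" where
  "defect_series x = (\<Sum>n. sqrt_coeff n *\<^sub>R (gram ^^ n) x)"

lemma bop_gram: "bop gram"
  using bop_comp[OF bop_adj[OF bop_T] bop_T] by (simp add: gram_def[abs_def])

lemma bop_gram_pow: "bop (gram ^^ n)"
  by (rule bop_funpow[OF bop_gram])

lemma norm_gram_pow_le: "norm ((gram ^^ n) x) \<le> norm x"
proof (induction n arbitrary: x)
  case (Suc n)
  have "norm (gram y) \<le> norm y" for y
    unfolding gram_def using norm_adj_le_if_contraction[OF bop_T norm_T_le] norm_T_le order_trans by blast
  thus ?case using order_trans[OF _ Suc.IH[of x]] by simp
qed simp

lemma gram_pow_selfadjoint: "cinner ((gram ^^ n) x) y = cinner x ((gram ^^ n) y)"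
proof (induction n arbitrary: x y)
  case (Suc n)
  have "cinner (gram x) y = cinner x (gram y)" for x y
    by (simp add: gram_def cinner_adj_right[OF bop_T, symmetric] cinner_adj_left[OF bop_T, symmetric])
  thus ?case using Suc by (simp add: funpow_swap1)
qed simp

lemma summable_norm_defect_series: "summable (\<lambda>n. norm (sqrt_coeff n *\<^sub>R (gram ^^ n) x))"
proof (rule summable_comparison_test)
  show "\<exists>N. \<forall>n\<ge>N. norm (norm (sqrt_coeff n *\<^sub>R (gram ^^ n) x)) \<le> \<bar>sqrt_coeff n\<bar> * norm x"
    using norm_gram_pow_le by (auto intro!: mult_left_mono)
  show "summable (\<lambda>n. \<bar>sqrt_coeff n\<bar> * norm x)"
    by (rule summable_mult2[OF summable_abs_sqrt_coeff])
qed

lemma summable_defect_series: "summable (\<lambda>n. sqrt_coeff n *\<^sub>R (gram ^^ n) x)"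
  using summable_norm_defect_series by (rule summable_norm_cancel)

lemma bop_commute_defect_series:
  assumes Q: "bop Q" and Q_gram: "\<And>x. Q (gram x) = gram (Q x)"
  shows "Q (defect_series x) = defect_series (Q x)"
proof -
  have Q_pow: "Q ((gram ^^ n) x) = (gram ^^ n) (Q x)" for n x
    by (induction n arbitrary: x) (auto simp: Q_gram)
  have "Q (defect_series x) = (\<Sum>n. Q (sqrt_coeff n *\<^sub>R (gram ^^ n) x))"
    unfolding defect_series_def
    by (rule bounded_linear.suminf[OF bop_bounded_linear[OF Q] summable_defect_series])
  also have "\<dots> = defect_series (Q x)" by (simp add: defect_series_def bop_scaleR[OF Q] Q_pow)
  finally show ?thesis .
qed

lemma bop_defect_series: "bop defect_series"
proof -
  have "defect_series (x + y) = defect_series x + defect_series y" for x y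
    using suminf_add[OF summable_defect_series[of x] summable_defect_series[of y]]
    by (simp add: defect_series_def bop_add[OF bop_gram_pow] scaleR_add_right)
  moreover have "defect_series (c *\<^sub>C x) = c *\<^sub>C defect_series x" for c x
    using bounded_linear.suminf[OF bounded_linear_scaleC summable_defect_series, of c x]
    by (simp add: defect_series_def bop_scaleC[OF bop_gram_pow] scaleC_scaleR_commute)
  moreover have "norm (defect_series x) \<le> (\<Sum>n. \<bar>sqrt_coeff n\<bar>) * norm x" for x
  proof -
    have "norm (defect_series x) \<le> (\<Sum>n. norm (sqrt_coeff n *\<^sub>R (gram ^^ n) x))"
      unfolding defect_series_def by (rule summable_norm[OF summable_norm_defect_series])
    also have "\<dots> \<le> (\<Sum>n. \<bar>sqrt_coeff n\<bar> * norm x)"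
      using norm_gram_pow_le
      by (intro suminf_le summable_norm_defect_series summable_mult2[OF summable_abs_sqrt_coeff])
        (auto intro!: mult_left_mono)
    also have "\<dots> = (\<Sum>n. \<bar>sqrt_coeff n\<bar>) * norm x"
      by (rule suminf_mult2[symmetric, OF summable_abs_sqrt_coeff])
    finally show ?thesis .
  qed
  ultimately show ?thesis by (auto simp: bounded_op_on_def clinear_on_def)
qed

lemma cinner_defect_series_left:
  "cinner (defect_series x) y = (\<Sum>n. sqrt_coeff n *\<^sub>R cinner ((gram ^^ n) x) y)"
  unfolding defect_series_def
  by (subst bounded_linear.suminf[OF bounded_linear_cinner_left summable_defect_series])
    (simp add: cinner_scaleR_left)

lemma cinner_defect_series_right:
  "cinner x (defect_series y) = (\<Sum>n. sqrt_coeff n *\<^sub>R cinner x ((gram ^^ n) y))"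
  unfolding defect_series_def
  by (subst bounded_linear.suminf[OF bounded_linear_cinner_right summable_defect_series])
    (simp add: cinner_scaleR_right)

lemma defect_series_selfadjoint: "cinner (defect_series x) y = cinner x (defect_series y)"
  by (simp add: cinner_defect_series_left cinner_defect_series_right gram_pow_selfadjoint)

text \<open>All coefficients after the first are nonpositive and \<open>|\<langle>(T\<^sup>*T)\<^sup>n x, x\<rangle>| \<le> \<parallel>x\<parallel>\<^sup>2\<close>, so
  the form is bounded below by \<open>(\<Sum>n. sqrt_coeff n) \<parallel>x\<parallel>\<^sup>2 \<ge> 0\<close>.\<close>

lemma Re_cinner_defect_series_nonneg: "0 \<le> Re (cinner (defect_series x) x)"
proof -
  have sm: "summable (\<lambda>n. sqrt_coeff n *\<^sub>R cinner ((gram ^^ n) x) x)"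
    using bounded_linear.summable[OF bounded_linear_cinner_left summable_defect_series]
    by (simp add: cinner_scaleR_left)
  have term_ge: "sqrt_coeff n * (norm x)\<^sup>2 \<le> Re (sqrt_coeff n *\<^sub>R cinner ((gram ^^ n) x) x)" for n
  proof (cases n)
    case 0 thus ?thesis by (simp add: Re_cinner_self)
  next
    case (Suc m)
    have "Re (cinner ((gram ^^ n) x) x) \<le> cmod (cinner ((gram ^^ n) x) x)"
      by (rule complex_Re_le_cmod)
    also have "\<dots> \<le> norm ((gram ^^ n) x) * norm x" by (rule Cauchy_Schwarz_cinner)
    also have "\<dots> \<le> norm x * norm x" using norm_gram_pow_le by (intro mult_right_mono) auto
    finally have "Re (cinner ((gram ^^ n) x) x) \<le> (norm x)\<^sup>2" by (simp add: power2_eq_square)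
    moreover have "sqrt_coeff n \<le> 0" using Suc sqrt_coeff_Suc_nonpos by simp
    ultimately show ?thesis using mult_left_mono_neg by simp
  qed
  have "suminf sqrt_coeff * (norm x)\<^sup>2 = (\<Sum>n. sqrt_coeff n * (norm x)\<^sup>2)"
    by (rule suminf_mult2[OF summable_sqrt_coeff])
  also have "\<dots> \<le> (\<Sum>n. Re (sqrt_coeff n *\<^sub>R cinner ((gram ^^ n) x) x))"
    using term_ge
    by (intro suminf_le summable_mult2[OF summable_sqrt_coeff]
        bounded_linear.summable[OF bounded_linear_Re sm])
  also have "\<dots> = Re (cinner (defect_series x) x)"
    unfolding cinner_defect_series_left by (rule Re_suminf[OF sm, symmetric])
  finally show ?thesis using suminf_sqrt_coeff_nonneg by (meson mult_nonneg_nonneg zero_le_power2 order_trans)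
qed

lemma positive_defect_series: "positive_op defect_series"
proof -
  have "Im (cinner (defect_series x) x) = 0" for x
  proof -
    have "cinner (defect_series x) x = cnj (cinner (defect_series x) x)"
      by (metis defect_series_selfadjoint cinner_conj)
    hence "Im (cinner (defect_series x) x) = Im (cnj (cinner (defect_series x) x))" by (rule arg_cong)
    thus ?thesis by simp
  qed
  thus ?thesis using bop_defect_series Re_cinner_defect_series_nonneg by (simp add: positive_op_def)
qed

lemma defect_series_Cauchy_term:
  "(\<Sum>i\<le>k. sqrt_coeff i *\<^sub>R (gram ^^ i) (sqrt_coeff (k - i) *\<^sub>R (gram ^^ (k - i)) x))
    = (if k = 0 then x else if k = 1 then - gram x else 0)"
proof -
  have "(\<Sum>i\<le>k. sqrt_coeff i *\<^sub>R (gram ^^ i) (sqrt_coeff (k - i) *\<^sub>R (gram ^^ (k - i)) x))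
      = (\<Sum>i\<le>k. (sqrt_coeff i * sqrt_coeff (k - i)) *\<^sub>R (gram ^^ k) x)"
  proof (intro sum.cong refl)
    fix i assume "i \<in> {..k}"
    hence "(gram ^^ i) ((gram ^^ (k - i)) x) = (gram ^^ k) x"
      by (simp flip: funpow_add[unfolded comp_def, THEN fun_cong])
    thus "sqrt_coeff i *\<^sub>R (gram ^^ i) (sqrt_coeff (k - i) *\<^sub>R (gram ^^ (k - i)) x)
        = (sqrt_coeff i * sqrt_coeff (k - i)) *\<^sub>R (gram ^^ k) x"
      by (simp add: bop_scaleR[OF bop_gram_pow])
  qed
  also have "\<dots> = (if k = 0 then x else if k = 1 then - gram x else 0)"
    by (simp add: scaleR_sum_left[symmetric] sqrt_coeff_convolution)
  finally show ?thesis .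
qed

lemma defect_series_square: "defect_series (defect_series x) = x - gram x"
proof -
  define a where "a i = sqrt_coeff i *\<^sub>R Blinfun (gram ^^ i)" for i
  define b where "b j = sqrt_coeff j *\<^sub>R (gram ^^ j) x" for j
  have a_apply: "blinfun_apply (a i) y = sqrt_coeff i *\<^sub>R (gram ^^ i) y" for i y
    using bounded_linear_Blinfun_apply[OF bop_bounded_linear[OF bop_gram_pow]]
    by (simp add: a_def blinfun.scaleR_left)
  have "norm (Blinfun (gram ^^ i)) \<le> 1" for i
    using bounded_linear_Blinfun_apply[OF bop_bounded_linear[OF bop_gram_pow]] norm_gram_pow_le
    by (intro norm_blinfun_bound) auto
  hence sa: "summable (\<lambda>k. norm (a k))"
    by (intro summable_comparison_test[OF _ summable_abs_sqrt_coeff])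
      (auto simp: a_def intro!: mult_left_le)
  have sb: "summable (\<lambda>k. norm (b k))" unfolding b_def by (rule summable_norm_defect_series)
  have "(\<lambda>k. \<Sum>i\<le>k. blinfun_apply (a i) (b (k - i))) sums (blinfun_apply (\<Sum>k. a k) (\<Sum>k. b k))"
    by (rule Cauchy_product_sums_bounded_bilinear[OF bounded_bilinear_blinfun_apply sa sb])
  moreover have "blinfun_apply (\<Sum>k. a k) (\<Sum>k. b k) = defect_series (defect_series x)"
  proof -
    have "blinfun_apply (\<Sum>k. a k) v = (\<Sum>k. blinfun_apply (a k) v)" for v
      by (rule bounded_linear.suminf[OF blinfun.bounded_linear_left summable_norm_cancel[OF sa]])
    thus ?thesis by (simp add: a_apply b_def defect_series_def)
  qed
  moreover have "(\<lambda>k. \<Sum>i\<le>k. blinfun_apply (a i) (b (k - i))) sums (x - gram x)"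
  proof -
    have "(\<lambda>k. if k = 0 then x else if k = 1 then - gram x else 0) sums
        (\<Sum>k\<in>{0::nat,1}. if k = 0 then x else if k = 1 then - gram x else 0)"
      by (intro sums_finite) auto
    thus ?thesis by (simp add: a_apply b_def defect_series_Cauchy_term)
  qed
  ultimately show ?thesis by (metis sums_unique2)
qed

text \<open>A positive square root \<open>Q\<close> of \<open>I - T\<^sup>*T\<close> commutes with \<open>T\<^sup>*T\<close>, hence with
  \<open>defect_series\<close>; for \<open>y = defect_series x - Q x\<close> this gives
  \<open>defect_series y + Q y = 0\<close>, and positivity of both forces \<open>y = 0\<close>.\<close>

lemma positive_sqrt_unique:
  assumes Q: "positive_op Q" and QQ: "Q \<circ> Q = (\<lambda>x. x - gram x)"
  shows "Q = defect_series"
proof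
  fix x
  have bQ: "bop Q" using Q by (simp add: positive_op_def)
  have QQx: "Q (Q v) = v - gram v" for v using QQ by (metis comp_apply)
  have "Q (gram v) = gram (Q v)" for v
  proof -
    have "gram v = v - Q (Q v)" using QQx[of v] by simp
    hence "Q (gram v) = Q v - Q (Q (Q v))" by (simp add: bop_diff[OF bQ])
    also have "\<dots> = gram (Q v)" using QQx[of "Q v"] by simp
    finally show ?thesis .
  qed
  hence comm: "Q (defect_series v) = defect_series (Q v)" for v
    by (rule bop_commute_defect_series[OF bQ])
  define y where "y = defect_series x - Q x"
  have "defect_series y + Q y = 0"
    by (simp add: y_def bop_diff[OF bop_defect_series] bop_diff[OF bQ] defect_series_square comm QQx)
  hence "cinner (defect_series y) y + cinner (Q y) y = 0"
    by (simp add: cinner_add_left[symmetric])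
  moreover have "0 \<le> Re (cinner (defect_series y) y)" "0 \<le> Re (cinner (Q y) y)"
    "Im (cinner (defect_series y) y) = 0" "Im (cinner (Q y) y) = 0"
    using positive_defect_series Q by (auto simp: positive_op_def)
  ultimately have "cinner (defect_series y) y = 0" "cinner (Q y) y = 0"
    by (simp_all add: complex_eq_iff)
  hence "defect_series y = 0" "Q y = 0"
    using positive_op_form_zero[OF positive_defect_series] positive_op_form_zero[OF Q] by auto
  moreover have "cinner y y = cinner x (defect_series y) - cinner x (Q y)"
    by (simp add: y_def cinner_diff_left defect_series_selfadjoint positive_op_selfadjoint[OF Q])
  ultimately have "y = 0" by simp
  thus "Q x = defect_series x" by (simp add: y_def)
qed

lemma defect_eq_defect_series: "defect T = defect_series"
proof -
  have "(\<lambda>x. x - adj T (T x)) = (\<lambda>x. x - gram x)" by (simp add: gram_def)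
  moreover have "positive_op defect_series \<and> defect_series \<circ> defect_series = (\<lambda>x. x - gram x)"
    using positive_defect_series by (auto simp: defect_series_square)
  ultimately show ?thesis
    unfolding defect_def op_sqrt_def using positive_sqrt_unique by (intro the_equality) auto
qed

lemma defect_square: "defect T (defect T x) = x - adj T (T x)"
  by (simp add: defect_eq_defect_series defect_series_square gram_def)

lemma defect_selfadjoint: "cinner (defect T x) y = cinner x (defect T y)"
  by (simp add: defect_eq_defect_series defect_series_selfadjoint)

lemma bop_defect: "bop (defect T)"
  by (simp add: defect_eq_defect_series bop_defect_series)

end

lemma contraction_adjI: "contraction T \<Longrightarrow> contraction (adj T)"
  by unfold_locales (auto simp: contraction_def bop_adj norm_adj_le_if_contraction)

lemma contraction_defect_intertwine:
  assumes "contraction T"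
  shows "T (defect T x) = defect (adj T) (T x)"
proof -
  interpret T: contraction T by (rule assms)
  interpret T': contraction "adj T" by (rule contraction_adjI[OF assms])
  have T_gram: "T (T.gram v) = T'.gram (T v)" for v
    by (simp add: T.gram_def T'.gram_def adj_adj[OF T.bop_T])
  have "T ((T.gram ^^ n) v) = (T'.gram ^^ n) (T v)" for n v
    by (induction n arbitrary: v) (auto simp: T_gram)
  moreover have "T (T.defect_series x) = (\<Sum>n. T (sqrt_coeff n *\<^sub>R (T.gram ^^ n) x))"
    unfolding T.defect_series_def
    by (rule bounded_linear.suminf[OF bop_bounded_linear[OF T.bop_T] T.summable_defect_series])
  ultimately show ?thesis
    by (simp add: T'.defect_series_def bop_scaleR[OF T.bop_T] T.defect_eq_defect_series
        T'.defect_eq_defect_series)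
qed

lemma closure_csubspace:
  assumes A: "csubspace (A::'a::chilbert set)"
  shows "csubspace (closure A)"
proof -
  have "0 \<in> closure A" using csubspace_0[OF A] closure_subset by blast
  moreover have "x + y \<in> closure A" if xy: "x \<in> closure A" "y \<in> closure A" for x y
  proof -
    obtain f where f: "\<forall>n. f n \<in> A" "f \<longlonglongrightarrow> x"
      using xy(1) unfolding closure_sequential by blast
    obtain g where g: "\<forall>n. g n \<in> A" "g \<longlonglongrightarrow> y"
      using xy(2) unfolding closure_sequential by blast
    have "\<forall>n. f n + g n \<in> A" using f(1) g(1) csubspace_add[OF A] by blast
    moreover have "(\<lambda>n. f n + g n) \<longlonglongrightarrow> x + y" using f(2) g(2) by (rule tendsto_add)
    ultimately show ?thesis unfolding closure_sequential by (intro exI[of _ "\<lambda>n. f n + g n"]) simp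
  qed
  moreover have "c *\<^sub>C x \<in> closure A" if x: "x \<in> closure A" for c x
  proof -
    obtain f where f: "\<forall>n. f n \<in> A" "f \<longlonglongrightarrow> x"
      using x unfolding closure_sequential by blast
    have "\<forall>n. c *\<^sub>C f n \<in> A" using f(1) csubspace_scaleC[OF A] by blast
    moreover have "(\<lambda>n. c *\<^sub>C f n) \<longlonglongrightarrow> c *\<^sub>C x"
      using f(2) by (rule bounded_linear.tendsto[OF bounded_linear_scaleC])
    ultimately show ?thesis unfolding closure_sequential by (intro exI[of _ "\<lambda>n. c *\<^sub>C f n"]) simp
  qed
  ultimately show ?thesis unfolding csubspace_def by blast
qed

lemma csubspace_closure_range:
  assumes T: "bop (T::'a::chilbert \<Rightarrow> 'a)"
  shows "csubspace (closure (range T))"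
proof (rule closure_csubspace)
  have "0 \<in> range T" using bop_zero[OF T] by (metis rangeI)
  moreover have "T a + T b \<in> range T" for a b using bop_add[OF T, of a b] by (metis rangeI)
  moreover have "c *\<^sub>C T a \<in> range T" for c a using bop_scaleC[OF T, of c a] by (metis rangeI)
  ultimately show "csubspace (range T)" unfolding csubspace_def by auto
qed

lemma cinner_zero_on_closure:
  assumes h: "\<And>a. a \<in> A \<Longrightarrow> cinner a v = 0" and a: "a \<in> closure A"
  shows "cinner a (v::'a::chilbert) = 0"
proof -
  have "continuous_on UNIV (\<lambda>a. cinner a v)"
    by (rule linear_continuous_on[OF bounded_linear_cinner_left])
  hence "closed {a. cinner a v = 0}"
    using continuous_closed_preimage_constant[OF _ closed_UNIV, of _ 0] by simp
  hence "closure A \<subseteq> {a. cinner a v = 0}" using h by (intro closure_minimal) auto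
  thus ?thesis using a by blast
qed

lemma closure_range_orthogonal_zero:
  assumes v: "v \<in> closure (range (T::'a::chilbert \<Rightarrow> 'a))" and h: "\<And>x. cinner (T x) v = 0"
  shows "v = 0"
  using cinner_zero_on_closure[of "range T" v v] h v by auto

lemma bop_image_closure_range:
  assumes Q: "bop (Q::'a::chilbert \<Rightarrow> 'a)" and h: "\<And>x. Q (T x) \<in> closure (range T')"
  shows "Q ` closure (range T) \<subseteq> closure (range T')"
proof (rule image_closure_subset)
  show "continuous_on (closure (range T)) Q"
    by (rule linear_continuous_on[OF bop_bounded_linear[OF Q]])
  show "Q ` range T \<subseteq> closure (range T')" using h by auto
qed simp

section \<open>The resolvent of a contraction\<close>

lemma inv_op_eqI:
  assumes "\<And>a b. f a = f b \<Longrightarrow> a = b" and "f v = w"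
  shows "inv_op f w = v"
  unfolding inv_op_def using assms by (intro the_equality) auto

locale contraction_resolvent = contraction T for T :: "'a::chilbert \<Rightarrow> 'a" +
  fixes z :: complex
  assumes norm_z: "cmod z < 1"
begin

definition resolvent :: "'a \<Rightarrow> 'a" where "resolvent = inv_op (\<lambda>y. y - z *\<^sub>C T y)"

lemma resolvent_inj:
  assumes "a - z *\<^sub>C T a = b - z *\<^sub>C T b"
  shows "a = b"
proof -
  have "a - b = z *\<^sub>C T (a - b)"
    using assms by (simp add: bop_diff[OF bop_T] scaleC_diff_right algebra_simps)
  hence "norm (a - b) = cmod z * norm (T (a - b))" by (metis norm_scaleC)
  also have "\<dots> \<le> cmod z * norm (a - b)" using norm_T_le by (intro mult_left_mono) auto
  finally have "(1 - cmod z) * norm (a - b) \<le> 0" by (simp add: algebra_simps)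
  hence "norm (a - b) \<le> 0" using norm_z by (simp add: mult_le_0_iff)
  thus "a = b" by simp
qed

lemma summable_Neumann: "summable (\<lambda>n. z ^ n *\<^sub>C (T ^^ n) w)"
proof (rule summable_norm_cancel, rule summable_comparison_test)
  have "norm ((T ^^ n) w) \<le> norm w" for n
    by (induction n) (auto intro: order_trans[OF norm_T_le])
  hence "cmod z ^ n * norm ((T ^^ n) w) \<le> cmod z ^ n * norm w" for n by (intro mult_left_mono) auto
  thus "\<exists>N. \<forall>n\<ge>N. norm (norm (z ^ n *\<^sub>C (T ^^ n) w)) \<le> norm w * cmod z ^ n"
    by (simp add: norm_scaleC norm_power mult.commute)
  show "summable (\<lambda>n. norm w * cmod z ^ n)"
    using norm_z by (intro summable_mult summable_geometric) auto
qed

text \<open>The Neumann series \<open>\<Sum> z\<^sup>n T\<^sup>n w\<close> is a preimage of \<open>w\<close> under \<open>I - z T\<close>.\<close>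

lemma resolvent_eq: "resolvent w - z *\<^sub>C T (resolvent w) = w"
proof -
  define v where "v = (\<Sum>n. z ^ n *\<^sub>C (T ^^ n) w)"
  have "z *\<^sub>C T v = (\<Sum>n. z *\<^sub>C T (z ^ n *\<^sub>C (T ^^ n) w))"
    unfolding v_def
    by (rule bounded_linear.suminf[OF bounded_linear_compose[OF bounded_linear_scaleC
          bop_bounded_linear[OF bop_T]] summable_Neumann])
  also have "\<dots> = (\<Sum>n. z ^ Suc n *\<^sub>C (T ^^ Suc n) w)"
    by (simp add: bop_scaleC[OF bop_T] scaleC_scaleC mult.commute)
  also have "\<dots> = v - w"
    unfolding v_def using suminf_split_head[OF summable_Neumann[of w]] by simp
  finally have eq: "v - z *\<^sub>C T v = w" by simp
  hence "resolvent w = v" unfolding resolvent_def using resolvent_inj by (intro inv_op_eqI)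
  thus ?thesis using eq by simp
qed

lemma resolvent_unique: "v - z *\<^sub>C T v = w \<Longrightarrow> resolvent w = v"
  using resolvent_inj resolvent_eq by metis

lemma resolvent_expand: "resolvent w = w + z *\<^sub>C T (resolvent w)"
  using resolvent_eq[of w] by (simp add: algebra_simps)

lemma bop_commute_resolvent:
  assumes Q: "bop Q" and QT: "\<And>x. Q (T x) = T (Q x)"
  shows "Q (resolvent w) = resolvent (Q w)"
proof -
  have "Q (resolvent w) - z *\<^sub>C T (Q (resolvent w)) = Q w"
    using resolvent_eq[of w] by (metis QT Q bop_diff bop_scaleC)
  thus ?thesis by (rule resolvent_unique[symmetric])
qed

lemma resolvent_add: "resolvent (a + b) = resolvent a + resolvent b"
proof (rule resolvent_unique)
  have "(resolvent a + resolvent b) - z *\<^sub>C T (resolvent a + resolvent b)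
      = (resolvent a - z *\<^sub>C T (resolvent a)) + (resolvent b - z *\<^sub>C T (resolvent b))"
    by (simp add: bop_add[OF bop_T] scaleC_add_right algebra_simps)
  thus "(resolvent a + resolvent b) - z *\<^sub>C T (resolvent a + resolvent b) = a + b"
    by (simp add: resolvent_eq)
qed

lemma resolvent_scaleC: "resolvent (c *\<^sub>C a) = c *\<^sub>C resolvent a"
proof (rule resolvent_unique)
  have "c *\<^sub>C resolvent a - z *\<^sub>C T (c *\<^sub>C resolvent a)
      = c *\<^sub>C (resolvent a - z *\<^sub>C T (resolvent a))"
    by (simp add: bop_scaleC[OF bop_T] scaleC_diff_right scaleC_scaleC mult.commute)
  thus "c *\<^sub>C resolvent a - z *\<^sub>C T (c *\<^sub>C resolvent a) = c *\<^sub>C a"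
    by (simp add: resolvent_eq)
qed

end

section \<open>Identities for the fundamental operator\<close>

locale fundamental_triple =
  fixes S P F :: "'a::chilbert \<Rightarrow> 'a"
  assumes bop_S: "bop S" and bop_P: "bop P" and S_P_commute: "\<And>x. S (P x) = P (S x)"
    and norm_P_le: "\<And>x. norm (P x) \<le> norm x"
    and fundamental_F: "fundamental_operator S P F"
begin

abbreviation "D \<equiv> defect P"
abbreviation "M \<equiv> defect_space P"
abbreviation "Fa \<equiv> adjoint_on (defect_space P) F"
abbreviation "Sa \<equiv> adj S"
abbreviation "Pa \<equiv> adj P"

lemma contraction_P: "contraction P"
  by unfold_locales (auto simp: bop_P norm_P_le)

lemma bop_D: "bop D" by (rule contraction.bop_defect[OF contraction_P])
lemma D_selfadjoint: "cinner (D x) y = cinner x (D y)"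
  by (rule contraction.defect_selfadjoint[OF contraction_P])
lemma D_D: "D (D x) = x - Pa (P x)" by (rule contraction.defect_square[OF contraction_P])
lemma bop_Sa: "bop Sa" by (rule bop_adj[OF bop_S])
lemma bop_Pa: "bop Pa" by (rule bop_adj[OF bop_P])

lemma M_eq: "M = closure (range D)" by (simp add: defect_space_def)
lemma closed_M: "closed M" by (simp add: M_eq)
lemma csubspace_M: "csubspace M" unfolding M_eq by (rule csubspace_closure_range[OF bop_D])
lemma D_in_M: "D x \<in> M" unfolding M_eq by (rule subsetD[OF closure_subset rangeI])

lemma bop_on_F: "bounded_op_on M F" using fundamental_F by (simp add: fundamental_operator_def)
lemma F_in_M: "x \<in> M \<Longrightarrow> F x \<in> M" using fundamental_F by (auto simp: fundamental_operator_def)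
lemma D_F_D: "D (F (D h)) = S h - Sa (P h)"
  using fundamental_F unfolding fundamental_operator_def by metis

lemma Fa_in_M: "Fa y \<in> M" by (rule adjoint_on_in[OF closed_M csubspace_M bop_on_F])
lemma cinner_F_left: "x \<in> M \<Longrightarrow> cinner (F x) y = cinner x (Fa y)"
  by (rule cinner_adjoint_on[OF closed_M csubspace_M bop_on_F])
lemma cinner_F_right: "x \<in> M \<Longrightarrow> cinner y (F x) = cinner (Fa y) x"
  using cinner_F_left[of x y] cinner_conj[of y "F x"] cinner_conj[of "Fa y" x] by simp

lemma Fa_add: "Fa (a + b) = Fa a + Fa b"
  by (rule adjoint_on_add[OF closed_M csubspace_M bop_on_F])
lemma Fa_scaleC: "Fa (c *\<^sub>C a) = c *\<^sub>C Fa a"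
  by (rule adjoint_on_scaleC[OF closed_M csubspace_M bop_on_F])
lemma Fa_minus: "Fa (- a) = - Fa a"
  by (rule adjoint_on_minus[OF closed_M csubspace_M bop_on_F])
lemma Fa_diff: "Fa (a - b) = Fa a - Fa b"
  by (rule adjoint_on_diff[OF closed_M csubspace_M bop_on_F])

lemma F_add: "a \<in> M \<Longrightarrow> b \<in> M \<Longrightarrow> F (a + b) = F a + F b"
  using bop_on_F by (simp add: bounded_op_on_def clinear_on_def)
lemma F_scaleC: "a \<in> M \<Longrightarrow> F (c *\<^sub>C a) = c *\<^sub>C F a"
  using bop_on_F by (simp add: bounded_op_on_def clinear_on_def)
lemma F_minus: "a \<in> M \<Longrightarrow> F (- a) = - F a"
  using F_scaleC[of a "-1"] by (simp add: scaleC_minus1)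

lemma cinner_S_left: "cinner (S x) y = cinner x (Sa y)" by (rule cinner_adj_right[OF bop_S])
lemma cinner_S_right: "cinner x (S y) = cinner (Sa x) y" by (rule cinner_adj_left[OF bop_S])
lemma cinner_P_left: "cinner (P x) y = cinner x (Pa y)" by (rule cinner_adj_right[OF bop_P])
lemma cinner_P_right: "cinner x (P y) = cinner (Pa x) y" by (rule cinner_adj_left[OF bop_P])
lemma cinner_Sa_left: "cinner (Sa x) y = cinner x (S y)" by (simp add: cinner_S_right)
lemma cinner_Sa_right: "cinner x (Sa y) = cinner (S x) y" by (simp add: cinner_S_left)
lemma cinner_Pa_right: "cinner x (Pa y) = cinner (P x) y" by (simp add: cinner_P_left)

lemma cinner_M_eq_0:
  assumes "x \<in> M" and "\<And>k. cinner (D k) v = 0"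
  shows "cinner x v = 0"
proof (rule cinner_zero_on_closure[of "range D"])
  show "x \<in> closure (range D)" using assms(1) by (simp add: M_eq)
qed (use assms(2) in blast)

lemma eq_in_M_if_cinner_D_eq:
  assumes a: "a \<in> M" and b: "b \<in> M" and h: "\<And>y. cinner a (D y) = cinner b (D y)"
  shows "a = b"
proof -
  have "cinner (D y) (a - b) = 0" for y
    using h[of y] cinner_conj[of "D y" "a - b"] by (simp add: cinner_diff_left)
  moreover have "a - b \<in> closure (range D)" using csubspace_diff[OF csubspace_M a b] by (simp add: M_eq)
  ultimately have "a - b = 0" by (intro closure_range_orthogonal_zero)
  thus ?thesis by simp
qed

lemma D_Fa_D: "D (Fa (D k)) = Sa k - Pa (S k)"
proof (rule cinner_ext_left)
  fix h
  have "cinner h (D (Fa (D k))) = cinner (D (F (D h))) k"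
    by (simp add: D_selfadjoint[symmetric] cinner_F_left[OF D_in_M, symmetric])
  also have "\<dots> = cinner h (Sa k - Pa (S k))"
    by (simp add: D_F_D cinner_diff_left cinner_diff_right cinner_S_left cinner_Sa_left cinner_P_left)
  finally show "cinner h (D (Fa (D k))) = cinner h (Sa k - Pa (S k))" .
qed

text \<open>Both sides lie in \<open>\<D>\<^sub>P\<close> and have the same image under \<open>D\<^sub>P\<close>, which is injective
  on \<open>\<D>\<^sub>P\<close>.\<close>

lemma D_S: "D (S h) = F (D h) + Fa (D (P h))"
proof -
  define w where "w = D (S h) - F (D h) - Fa (D (P h))"
  have w_in: "w \<in> M" unfolding w_def using csubspace_M D_in_M F_in_M Fa_in_M
    by (intro csubspace_diff) auto
  have "D w = D (D (S h)) - D (F (D h)) - D (Fa (D (P h)))"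
    by (simp add: w_def bop_diff[OF bop_D])
  also have "\<dots> = 0"
    by (simp add: D_D D_F_D D_Fa_D S_P_commute bop_diff[OF bop_Pa])
  finally have "cinner (D y) w = 0" for y by (simp add: D_selfadjoint)
  hence "w = 0" using w_in by (intro closure_range_orthogonal_zero[of w D]) (simp_all add: M_eq)
  thus ?thesis unfolding w_def by (simp add: algebra_simps)
qed

lemma Sa_D:
  assumes x: "x \<in> M"
  shows "Sa (D x) = D (Fa x) + Pa (D (F x))"
proof (rule cinner_ext_right)
  fix h
  have "cinner (Sa (D x)) h = cinner x (D (S h))"
    by (simp add: cinner_S_right[symmetric] D_selfadjoint)
  also have "\<dots> = cinner (D (Fa x)) h + cinner (D (F x)) (P h)"
    by (simp add: D_S cinner_add_right cinner_F_right[OF D_in_M] cinner_F_left[OF x, symmetric]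
        D_selfadjoint)
  finally show "cinner (Sa (D x)) h = cinner (D (Fa x) + Pa (D (F x))) h"
    by (simp add: cinner_add_left cinner_P_right)
qed

end

locale fundamental_pair =
  fundamental_triple S P F + dual: fundamental_triple "adj S" "adj P" G for S P F G :: "'a::chilbert \<Rightarrow> 'a"
begin

abbreviation "D' \<equiv> defect (adj P)"
abbreviation "M' \<equiv> defect_space (adj P)"
abbreviation "Ga \<equiv> adjoint_on (defect_space (adj P)) G"

lemma adj_Sa: "adj Sa = S" by (rule adj_adj[OF bop_S])
lemma adj_Pa: "adj Pa = P" by (rule adj_adj[OF bop_P])

lemma D'_D': "D' (D' x) = x - P (Pa x)" using dual.D_D by (simp add: adj_Pa)
lemma D'_G_D': "D' (G (D' h)) = Sa h - S (Pa h)" using dual.D_F_D by (simp add: adj_Sa)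
lemma P_D: "P (D x) = D' (P x)" by (rule contraction_defect_intertwine[OF contraction_P])
lemma Pa_D': "Pa (D' x) = D (Pa x)"
  using contraction_defect_intertwine[OF dual.contraction_P, of x] by (simp add: adj_Pa)

lemma P_in_M': "x \<in> M \<Longrightarrow> P x \<in> M'"
  using bop_image_closure_range[OF bop_P, of D D'] P_D dual.D_in_M
  by (auto simp: M_eq dual.M_eq)

lemmas adjoints_to_left = cinner_diff_left cinner_diff_right cinner_add_left cinner_add_right
  cinner_S_right cinner_Sa_right cinner_P_right cinner_Pa_right
  bop_diff[OF bop_P] bop_diff[OF bop_S] bop_diff[OF bop_Sa] bop_diff[OF bop_Pa]
  S_P_commute dual.S_P_commute

text \<open>The two identities below, together with \<open>dual.D_S\<close>, say that
  the coefficients of \<open>1, z, z\<^sup>2\<close> in the main identity agree.  Each is checked against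
  \<open>D\<^sub>P\<^sub>*\<close>-vectors, which reduces it to the defining identities of \<open>F\<close> and \<open>G\<close>.\<close>

lemma P_F:
  assumes x: "x \<in> M"
  shows "P (F x) = Ga (P x)"
proof (rule dual.eq_in_M_if_cinner_D_eq)
  show "P (F x) \<in> M'" "Ga (P x) \<in> M'" using P_in_M' F_in_M[OF x] dual.Fa_in_M by auto
  fix y
  have "cinner x (Fa (D (Pa y)) - Pa (G (D' y))) = 0"
  proof (rule cinner_M_eq_0[OF x])
    fix k
    have "cinner (D k) (Fa (D (Pa y))) = cinner (S k - Sa (P k)) (Pa y)"
      by (simp add: cinner_F_left[OF D_in_M, symmetric] D_selfadjoint[symmetric] D_F_D)
    moreover have "cinner (D k) (Pa (G (D' y))) = cinner (P k) (Sa y - S (Pa y))"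
      by (simp add: cinner_Pa_right P_D dual.D_selfadjoint D'_G_D')
    ultimately show "cinner (D k) (Fa (D (Pa y)) - Pa (G (D' y))) = 0"
      by (simp add: adjoints_to_left)
  qed
  thus "cinner (P (F x)) (D' y) = cinner (Ga (P x)) (D' y)"
    by (simp add: cinner_diff_right cinner_P_left Pa_D' cinner_F_left[OF x]
        dual.cinner_F_right[OF dual.D_in_M, symmetric])
qed

lemma D'_D_F:
  assumes x: "x \<in> M"
  shows "D' (D (F x)) - P (Fa x) = Ga (D' (D x)) - G (P x)"
proof (rule dual.eq_in_M_if_cinner_D_eq)
  show "D' (D (F x)) - P (Fa x) \<in> M'" "Ga (D' (D x)) - G (P x) \<in> M'"
    using dual.D_in_M P_in_M'[OF Fa_in_M] dual.Fa_in_M dual.F_in_M[OF P_in_M'[OF x]]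
    by (auto intro: csubspace_diff[OF dual.csubspace_M])
  fix y
  have "cinner x ((Fa (D (D' (D' y))) - F (D (Pa y))) - (D (D' (G (D' y))) - Pa (Ga (D' y)))) = 0"
  proof (rule cinner_M_eq_0[OF x])
    fix k
    have "cinner (D k) (Fa (D (D' (D' y)))) = cinner (S k - Sa (P k)) (y - P (Pa y))"
      by (simp add: cinner_F_left[OF D_in_M, symmetric] D_selfadjoint[symmetric] D_F_D D'_D')
    moreover have "cinner (D k) (F (D (Pa y))) = cinner k (S (Pa y) - Sa (P (Pa y)))"
      by (simp add: D_selfadjoint D_F_D)
    moreover have "cinner (D k) (D (D' (G (D' y)))) = cinner (k - Pa (P k)) (Sa y - S (Pa y))"
      by (simp add: D_selfadjoint[symmetric] D_D D'_G_D')
    moreover have "cinner (D k) (Pa (Ga (D' y))) = cinner (Sa (P k) - S (Pa (P k))) y"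
      by (simp add: cinner_Pa_right P_D dual.cinner_F_left[OF dual.D_in_M, symmetric]
          dual.D_selfadjoint[symmetric] D'_G_D')
    ultimately show "cinner (D k)
        ((Fa (D (D' (D' y))) - F (D (Pa y))) - (D (D' (G (D' y))) - Pa (Ga (D' y)))) = 0"
      by (simp add: adjoints_to_left)
  qed
  moreover have "cinner (D' (D (F x)) - P (Fa x)) (D' y)
      = cinner x (Fa (D (D' (D' y))) - F (D (Pa y)))"
    by (simp add: cinner_diff_left cinner_diff_right dual.D_selfadjoint D_selfadjoint
        cinner_F_left[OF x] cinner_P_left Pa_D' cinner_F_right[OF D_in_M, symmetric])
  moreover have "cinner (Ga (D' (D x)) - G (P x)) (D' y)
      = cinner x (D (D' (G (D' y))) - Pa (Ga (D' y)))"
    by (simp add: cinner_diff_left cinner_diff_right dual.cinner_F_right[OF dual.D_in_M, symmetric]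
        dual.D_selfadjoint D_selfadjoint dual.cinner_F_left[OF P_in_M'[OF x]] cinner_P_left)
  ultimately show "cinner (D' (D (F x)) - P (Fa x)) (D' y) = cinner (Ga (D' (D x)) - G (P x)) (D' y)"
    by (simp add: cinner_diff_right)
qed

end

section \<open>The characteristic function\<close>

locale fundamental_pair_disc = fundamental_pair S P F G for S P F G :: "'a::chilbert \<Rightarrow> 'a" +
  fixes z :: complex
  assumes norm_z: "cmod z < 1"
begin

sublocale Res: contraction_resolvent "adj P" z
  by unfold_locales (simp_all add: bop_Pa dual.norm_P_le norm_z)

abbreviation "R \<equiv> Res.resolvent"

lemma char_fun_eq: "char_fun P z u = - P u + z *\<^sub>C D' (R (D u))"
  by (simp add: char_fun_def Res.resolvent_def)

lemma Pa_R: "Pa (R w) = R (Pa w)"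
  by (rule Res.bop_commute_resolvent[OF bop_Pa]) simp

lemma Sa_R: "Sa (R w) = R (Sa w)"
  by (rule Res.bop_commute_resolvent[OF bop_Sa dual.S_P_commute])

lemma R_D_F_Fa:
  assumes x: "x \<in> M"
  shows "R (D (F x + z *\<^sub>C Fa x)) = D (F x) + z *\<^sub>C Sa (R (D x))"
proof -
  have "R (D (F x + z *\<^sub>C Fa x)) = R (D (F x)) + z *\<^sub>C R (D (Fa x))"
    by (simp add: bop_add[OF bop_D] bop_scaleC[OF bop_D] Res.resolvent_add Res.resolvent_scaleC)
  also have "R (D (F x)) = D (F x) + z *\<^sub>C R (Pa (D (F x)))"
    using Res.resolvent_expand[of "D (F x)"] by (simp add: Pa_R)
  also have "D (F x) + z *\<^sub>C R (Pa (D (F x))) + z *\<^sub>C R (D (Fa x))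
      = D (F x) + z *\<^sub>C R (Sa (D x))"
    by (simp add: Sa_D[OF x] Res.resolvent_add scaleC_add_right add.commute add.left_commute)
  finally show ?thesis by (simp add: Sa_R)
qed

lemma char_fun_F_expand:
  assumes x: "x \<in> M"
  shows "char_fun P z (F x + z *\<^sub>C Fa x)
    = - P (F x) + z *\<^sub>C (D' (D (F x)) - P (Fa x)) + (z * z) *\<^sub>C D' (Sa (R (D x)))"
  by (simp add: char_fun_eq R_D_F_Fa[OF x] bop_add[OF bop_P] bop_scaleC[OF bop_P]
      bop_add[OF dual.bop_D] bop_scaleC[OF dual.bop_D] scaleC_add_right scaleC_diff_right
      scaleC_scaleC algebra_simps)

lemma char_fun_G_expand:
  assumes x: "x \<in> M"
  shows "Ga (char_fun P z x) + z *\<^sub>C G (char_fun P z x)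
    = - Ga (P x) + z *\<^sub>C (Ga (D' (D x)) - G (P x))
      + (z * z) *\<^sub>C (G (D' (R (D x))) + Ga (D' (Pa (R (D x)))))"
proof -
  have D'_R: "D' (R (D x)) = D' (D x) + z *\<^sub>C D' (Pa (R (D x)))"
    using arg_cong[OF Res.resolvent_expand[of "D x"], of D']
    by (simp add: bop_add[OF dual.bop_D] bop_scaleC[OF dual.bop_D])
  have "- P x \<in> M'" "z *\<^sub>C D' (R (D x)) \<in> M'"
    using P_in_M'[OF x] dual.D_in_M csubspace_minus[OF dual.csubspace_M]
      csubspace_scaleC[OF dual.csubspace_M] by auto
  hence "G (char_fun P z x) = G (- P x) + G (z *\<^sub>C D' (R (D x)))"
    unfolding char_fun_eq by (rule dual.F_add)
  also have "\<dots> = - G (P x) + z *\<^sub>C G (D' (R (D x)))"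
    by (simp only: dual.F_minus[OF P_in_M'[OF x]] dual.F_scaleC[OF dual.D_in_M])
  finally have G_char: "G (char_fun P z x) = - G (P x) + z *\<^sub>C G (D' (R (D x)))" .
  have Ga_char: "Ga (char_fun P z x)
      = - Ga (P x) + z *\<^sub>C (Ga (D' (D x)) + z *\<^sub>C Ga (D' (Pa (R (D x)))))"
    by (simp add: char_fun_eq D'_R dual.Fa_add dual.Fa_diff dual.Fa_minus dual.Fa_scaleC)
  show ?thesis
    by (simp add: G_char Ga_char scaleC_add_right scaleC_diff_right scaleC_minus_right scaleC_scaleC
        algebra_simps)
qed

lemma char_fun_intertwine:
  assumes x: "x \<in> M"
  shows "char_fun P z (F x + z *\<^sub>C Fa x) = Ga (char_fun P z x) + z *\<^sub>C G (char_fun P z x)"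
  unfolding char_fun_F_expand[OF x] char_fun_G_expand[OF x]
  by (simp add: P_F[OF x] D'_D_F[OF x] dual.D_S)

end

text \<open>Testing the spectral-set inequality on the polynomial \<open>p(s, q) = q\<close> shows that \<open>P\<close> is a
  contraction.\<close>

lemma gamma_contraction_norm_le:
  assumes g: "gamma_contraction S (P::'a::chilbert \<Rightarrow> 'a)"
  shows "norm (P x) \<le> norm x"
proof -
  have bP: "bop P" using g by (simp add: gamma_contraction_def)
  define c :: "nat \<Rightarrow> nat \<Rightarrow> complex" where "c i j = (if i = 0 \<and> j = 1 then 1 else 0)" for i j
  have op: "poly2_op c 1 S P = P"
    by (rule ext) (simp add: poly2_op_def c_def atMost_Suc)
  have pl: "poly2 c 1 s p = p" for s p
    by (simp add: poly2_def c_def atMost_Suc)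
  have "onorm (poly2_op c 1 S P) \<le> (SUP w\<in>gamma_set. cmod (poly2 c 1 (fst w) (snd w)))"
    using g by (simp add: gamma_contraction_def)
  also have "(SUP w\<in>gamma_set. cmod (poly2 c 1 (fst w) (snd w))) \<le> 1"
  proof (rule cSUP_least)
    show "gamma_set \<noteq> {}" unfolding gamma_set_def by (auto intro!: exI[of _ 0])
    fix w assume "w \<in> gamma_set"
    then obtain z1 z2 where w: "w = (z1 + z2, z1 * z2)" "cmod z1 \<le> 1" "cmod z2 \<le> 1"
      by (auto simp: gamma_set_def)
    show "cmod (poly2 c 1 (fst w) (snd w)) \<le> 1"
      unfolding w(1) fst_conv snd_conv pl using w(2,3) by (simp add: norm_mult mult_le_one)
  qed
  finally have "onorm P \<le> 1" unfolding op .
  have "norm (P x) \<le> onorm P * norm x" by (rule onorm[OF bop_bounded_linear[OF bP]])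
  also have "\<dots> \<le> 1 * norm x" using \<open>onorm P \<le> 1\<close> by (intro mult_right_mono) auto
  finally show ?thesis by simp
qed

theorem theorem1:
  fixes S P F G :: "'a::chilbert \<Rightarrow> 'a"
  assumes "gamma_contraction S P"
    and "fundamental_operator S P F"
    and "fundamental_operator (adj S) (adj P) G"
  shows "\<forall>z. cmod z < 1 \<longrightarrow> (\<forall>x\<in>defect_space P.
           char_fun P z (F x + z *\<^sub>C adjoint_on (defect_space P) F x)
         = adjoint_on (defect_space (adj P)) G (char_fun P z x) + z *\<^sub>C G (char_fun P z x))"
proof (intro allI impI ballI)
  fix z x assume z: "cmod z < 1" and x: "x \<in> defect_space P"
  have S: "bop S" and P: "bop P" and SP: "S (P y) = P (S y)" for y
    using assms(1) by (auto simp: gamma_contraction_def fun_eq_iff)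
  have P_le: "norm (P y) \<le> norm y" for y by (rule gamma_contraction_norm_le[OF assms(1)])
  interpret fundamental_pair_disc S P F G z
    by unfold_locales
      (use assms(2,3) S P SP P_le z in \<open>auto simp: bop_adj adj_commute norm_adj_le_if_contraction\<close>)
  show "char_fun P z (F x + z *\<^sub>C adjoint_on (defect_space P) F x)
      = adjoint_on (defect_space (adj P)) G (char_fun P z x) + z *\<^sub>C G (char_fun P z x)"
    by (rule char_fun_intertwine[OF x])
qed

end
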